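(* Let $p$ be a prime. Up to scaling by $\mathbb{F}_p^\times$, there are $p^5$ forms $\overline F=\sum_{i,j}a_{ij}X_0^{2-i}X_1^iY_0^{2-j}Y_1^j$ over $\mathbb{F}_p$ with $a_{00}=a_{01}=a_{10}=0$ and $a_{20}\ne 0$ (equivalently, the curve $\overline F=0$ in $\mathbb{P}^1\times\mathbb{P}^1$ is singular at $((1:0),(1:0))$ and does not contain the line $Y_1=0$). The numbers of these in Cases 1(i), 1(ii), 1(iii), 2, 3, 4, 5 are respectively $$s_{11}=p^3(p-1)/2,\ s_{12}=0,\ s_{13}=p(p-1)^2/2,\ s_2=0,\ s_3=p(p-1)/2,\ s_4=p(p-1),\ s_5=p.$$ Moreover, those in Cases 1(i), 1(iii) and 4 all satisfy $a_{02}\ne 0$, while those in Cases 3 and 5 all satisfy $a_{02}=0$.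
   Context: A $(2,2)$-form over $\mathbb{F}_p$ is a polynomial homogeneous of degree 2 in $(X_0,X_1)$ and of degree 2 in $(Y_0,Y_1)$, defining a curve in $\mathbb{P}^1\times\mathbb{P}^1$; a $(d_1,d_2)$-form is defined analogously. The cases are: Case 1: the form is irreducible over $\mathbb{F}_p$ but factors over $\mathbb{F}_{p^2}$ as a $(1,1)$-form times its Galois conjugate, so its curve is geometrically two rational curves; Cases 1(i), 1(ii), 1(iii): these two curves meet in a pair of $\mathbb{F}_p$-points, a pair of conjugate $\mathbb{F}_{p^2}$-points, or a single $\mathbb{F}_p$-point, respectively. Case 2: product of an irreducible $(2,0)$-form and an irreducible $(0,2)$-form. Case 3: an irreducible $(2,0)$-form times the square of a $(0,1)$-form, or an irreducible $(0,2)$-form times the square of a $(1,0)$-form. Case 4: the square of an irreducible $(1,1)$-form. Case 5: the square of a $(1,0)$-form times the square of a $(0,1)$-form. *)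

theory Defs
  imports Main "HOL-Computational_Algebra.Primes"
begin

text \<open>A (d1,d2)-form is encoded by its coefficient function f, where f i j is the
coefficient of X0^(d1-i) X1^i Y0^(d2-j) Y1^j; it vanishes for i > d1 or j > d2.\<close>

definition is_form :: "nat \<Rightarrow> nat \<Rightarrow> (nat \<Rightarrow> nat \<Rightarrow> 'a::zero) \<Rightarrow> bool" where
  "is_form d1 d2 f \<longleftrightarrow> (\<forall>i j. (d1 < i \<or> d2 < j) \<longrightarrow> f i j = 0)"

definition fmul :: "(nat \<Rightarrow> nat \<Rightarrow> 'a::comm_semiring_1) \<Rightarrow> (nat \<Rightarrow> nat \<Rightarrow> 'a) \<Rightarrow> nat \<Rightarrow> nat \<Rightarrow> 'a" where
  "fmul f g = (\<lambda>i j. \<Sum>i1\<le>i. \<Sum>j1\<le>j. f i1 j1 * g (i - i1) (j - j1))"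

definition fscale :: "'a::times \<Rightarrow> (nat \<Rightarrow> nat \<Rightarrow> 'a) \<Rightarrow> nat \<Rightarrow> nat \<Rightarrow> 'a" where
  "fscale c f = (\<lambda>i j. c * f i j)"

text \<open>Irreducibility of a (d1,d2)-form as a polynomial over the field: nonzero, not a unit
(nonconstant), and not a product of two nonconstant forms (every factor of a bihomogeneous
polynomial is bihomogeneous).\<close>
definition irred_form :: "nat \<Rightarrow> nat \<Rightarrow> (nat \<Rightarrow> nat \<Rightarrow> 'a::field) \<Rightarrow> bool" where
  "irred_form d1 d2 F \<longleftrightarrow> is_form d1 d2 F \<and> F \<noteq> (\<lambda>i j. 0) \<and> (d1, d2) \<noteq> (0, 0) \<and>
     \<not> (\<exists>e1 e2 G H. e1 \<le> d1 \<and> e2 \<le> d2 \<and> (e1, e2) \<noteq> (0, 0) \<and> (e1, e2) \<noteq> (d1, d2) \<and>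
          is_form e1 e2 G \<and> is_form (d1 - e1) (d2 - e2) H \<and> F = fmul G H)"

definition eval_form :: "nat \<Rightarrow> nat \<Rightarrow> (nat \<Rightarrow> nat \<Rightarrow> 'a::comm_ring_1) \<Rightarrow> 'a \<times> 'a \<Rightarrow> 'a \<times> 'a \<Rightarrow> 'a" where
  "eval_form d1 d2 f P Q = (\<Sum>i\<le>d1. \<Sum>j\<le>d2.
      f i j * fst P ^ (d1 - i) * snd P ^ i * fst Q ^ (d2 - j) * snd Q ^ j)"

text \<open>Points of P^1 over a field, normalised representatives (1:t) and (0:1).\<close>
definition P1 :: "('a::field \<times> 'a) set" where
  "P1 = {(1, t) | t. True} \<union> {(0, 1)}"

text \<open>Galois conjugate (Frobenius z \<mapsto> z^p on coefficients) of a form over F_{p^2}.\<close>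
definition gconj :: "nat \<Rightarrow> (nat \<Rightarrow> nat \<Rightarrow> 'K::field) \<Rightarrow> nat \<Rightarrow> nat \<Rightarrow> 'K" where
  "gconj p G = (\<lambda>i j. G i j ^ p)"

definition conj_factor :: "nat \<Rightarrow> ('k::field \<Rightarrow> 'K::field) \<Rightarrow> (nat \<Rightarrow> nat \<Rightarrow> 'k) \<Rightarrow> (nat \<Rightarrow> nat \<Rightarrow> 'K) \<Rightarrow> bool" where
  "conj_factor p emb F G \<longleftrightarrow> is_form 1 1 G \<and> (\<lambda>i j. emb (F i j)) = fmul G (gconj p G)"

definition conj_inter :: "nat \<Rightarrow> (nat \<Rightarrow> nat \<Rightarrow> 'K::field) \<Rightarrow> (('K \<times> 'K) \<times> ('K \<times> 'K)) set" where
  "conj_inter p G = {(P, Q). P \<in> P1 \<and> Q \<in> P1 \<and> eval_form 1 1 G P Q = 0 \<and>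
                              eval_form 1 1 (gconj p G) P Q = 0}"

definition rational_pt :: "('k \<Rightarrow> 'K) \<Rightarrow> ('K \<times> 'K) \<times> ('K \<times> 'K) \<Rightarrow> bool" where
  "rational_pt emb z \<longleftrightarrow> fst (fst z) \<in> range emb \<and> snd (fst z) \<in> range emb \<and>
                          fst (snd z) \<in> range emb \<and> snd (snd z) \<in> range emb"

definition case1i :: "nat \<Rightarrow> ('k::field \<Rightarrow> 'K::field) \<Rightarrow> (nat \<Rightarrow> nat \<Rightarrow> 'k) \<Rightarrow> bool" where
  "case1i p emb F \<longleftrightarrow> irred_form 2 2 F \<and> (\<exists>G. conj_factor p emb F G \<and>
     card (conj_inter p G) = 2 \<and> (\<forall>z\<in>conj_inter p G. rational_pt emb z))"

definition case1ii :: "nat \<Rightarrow> ('k::field \<Rightarrow> 'K::field) \<Rightarrow> (nat \<Rightarrow> nat \<Rightarrow> 'k) \<Rightarrow> bool" where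
  "case1ii p emb F \<longleftrightarrow> irred_form 2 2 F \<and> (\<exists>G. conj_factor p emb F G \<and>
     card (conj_inter p G) = 2 \<and> (\<forall>z\<in>conj_inter p G. \<not> rational_pt emb z))"

definition case1iii :: "nat \<Rightarrow> ('k::field \<Rightarrow> 'K::field) \<Rightarrow> (nat \<Rightarrow> nat \<Rightarrow> 'k) \<Rightarrow> bool" where
  "case1iii p emb F \<longleftrightarrow> irred_form 2 2 F \<and> (\<exists>G. conj_factor p emb F G \<and>
     card (conj_inter p G) = 1 \<and> (\<forall>z\<in>conj_inter p G. rational_pt emb z))"

definition case2 :: "(nat \<Rightarrow> nat \<Rightarrow> 'k::field) \<Rightarrow> bool" where
  "case2 F \<longleftrightarrow> (\<exists>A B. irred_form 2 0 A \<and> irred_form 0 2 B \<and> F = fmul A B)"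

definition case3 :: "(nat \<Rightarrow> nat \<Rightarrow> 'k::field) \<Rightarrow> bool" where
  "case3 F \<longleftrightarrow> (\<exists>c A L. c \<noteq> 0 \<and> L \<noteq> (\<lambda>i j. 0) \<and> F = fscale c (fmul A (fmul L L)) \<and>
      ((irred_form 2 0 A \<and> is_form 0 1 L) \<or> (irred_form 0 2 A \<and> is_form 1 0 L)))"

definition case4 :: "(nat \<Rightarrow> nat \<Rightarrow> 'k::field) \<Rightarrow> bool" where
  "case4 F \<longleftrightarrow> (\<exists>c G. c \<noteq> 0 \<and> irred_form 1 1 G \<and> F = fscale c (fmul G G))"

definition case5 :: "(nat \<Rightarrow> nat \<Rightarrow> 'k::field) \<Rightarrow> bool" where
  "case5 F \<longleftrightarrow> (\<exists>c L M. c \<noteq> 0 \<and> is_form 1 0 L \<and> L \<noteq> (\<lambda>i j. 0) \<and>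
      is_form 0 1 M \<and> M \<noteq> (\<lambda>i j. 0) \<and> F = fscale c (fmul (fmul L L) (fmul M M)))"

definition sing_forms :: "(nat \<Rightarrow> nat \<Rightarrow> 'k::field) set" where
  "sing_forms = {a. is_form 2 2 a \<and> a 0 0 = 0 \<and> a 0 1 = 0 \<and> a 1 0 = 0 \<and> a 2 0 \<noteq> 0}"

definition scale_classes :: "(nat \<Rightarrow> nat \<Rightarrow> 'k::field) set \<Rightarrow> (nat \<Rightarrow> nat \<Rightarrow> 'k) set set" where
  "scale_classes A = (\<lambda>a. {fscale c a | c. c \<noteq> 0}) ` A"

end

theory Submission
  imports Defs "HOL-Computational_Algebra.Polynomial" "HOL-Number_Theory.Residues"
begin

text \<open>
  Scaling so that the coefficient of \<open>X\<^sub>1\<^sup>2Y\<^sub>0\<^sup>2\<close> is \<open>1\<close> picks one representative per class;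
  these representatives have the five free coefficients \<open>a\<^sub>0\<^sub>2, a\<^sub>1\<^sub>1, a\<^sub>1\<^sub>2, a\<^sub>2\<^sub>1, a\<^sub>2\<^sub>2\<close>.
  In every case the factors are forced through the point \<open>((1:0),(1:0))\<close>, which pins the
  normalised form down to an explicit family. In Case 1 it is the norm \<open>G G'\<close> of
  \<open>G = X\<^sub>1Y\<^sub>0 + g X\<^sub>0Y\<^sub>1 + h X\<^sub>1Y\<^sub>1\<close> with \<open>g, h \<in> \<bbbF>\<^bsub>p\<^sup>2\<^esub>\<close> and \<open>G'\<close> its Frobenius conjugate;
  \<open>(g, h)\<close> and \<open>(g\<^sup>p, h\<^sup>p)\<close> give the same form, which is irreducible iff \<open>g \<noteq> 0\<close> and
  \<open>g, h\<close> are not both in \<open>\<bbbF>\<^sub>p\<close>. Subtracting the equations of \<open>G\<close> and \<open>G'\<close> shows that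
  besides \<open>((1:0),(1:0))\<close> the two components meet in exactly one further point, a rational
  one, when \<open>g \<notin> \<bbbF>\<^sub>p\<close>, and in no further point when \<open>g \<in> \<bbbF>\<^sub>p\<close>. So Case 1(ii) is empty and
  Cases 1(i) and 1(iii) are counted by pairs \<open>(g, h)\<close> up to Frobenius. Case 2 would force \<open>a\<^sub>0\<^sub>0 \<noteq> 0\<close>; the
  remaining cases are \<open>X\<^sub>1\<^sup>2 Q(Y)\<close> with \<open>Q\<close> an irreducible monic quadratic,
  \<open>(X\<^sub>1Y\<^sub>0 + g X\<^sub>0Y\<^sub>1 + h X\<^sub>1Y\<^sub>1)\<^sup>2\<close> with \<open>g \<noteq> 0\<close>, and \<open>X\<^sub>1\<^sup>2(Y\<^sub>0 + m Y\<^sub>1)\<^sup>2\<close>.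
\<close>

section \<open>Bihomogeneous forms\<close>

lemma sum_atMost_zero: "(\<Sum>i\<le>(0::nat). f i) = f 0"
  by simp

lemma sum_atMost_one: "(\<Sum>i\<le>(1::nat). f i) = f 0 + f 1"
  by (simp add: atMost_Suc add.commute)

lemma sum_atMost_two: "(\<Sum>i\<le>(2::nat). f i) = f 0 + f 1 + f 2"
  by (simp add: atMost_Suc numeral_2_eq_2 add_ac)

lemmas sum_atMost_small = sum_atMost_zero sum_atMost_one sum_atMost_two

lemma eq_if_square_eq_and_double_eq:
  fixes x y :: "'a::idom"
  assumes "x * x = y * y" and "2 * x = 2 * y"
  shows "x = y"
proof -
  have "(x - y) * (x - y) = (x * x - y * y) - (2 * x - 2 * y) * y"
    by (simp add: algebra_simps)
  also have "\<dots> = 0"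
    by (simp only: assms diff_self mult_zero_left)
  finally show ?thesis
    by simp
qed

lemma is_formD: "is_form d1 d2 f \<Longrightarrow> d1 < i \<or> d2 < j \<Longrightarrow> f i j = 0"
  by (auto simp: is_form_def)

lemma form_eqI:
  assumes "is_form d1 d2 f" "is_form d1 d2 g"
    and "\<And>i j. i \<le> d1 \<Longrightarrow> j \<le> d2 \<Longrightarrow> f i j = g i j"
  shows "f = g"
proof (intro ext)
  fix i j
  show "f i j = g i j"
    using assms is_formD[OF assms(1), of i j] is_formD[OF assms(2), of i j]
    by (cases "i \<le> d1 \<and> j \<le> d2") auto
qed

lemma form11_eqI:
  assumes "is_form 1 1 f" "is_form 1 1 g"
    and "f 0 0 = g 0 0" "f 0 1 = g 0 1" "f 1 0 = g 1 0" "f 1 1 = g 1 1"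
  shows "f = g"
  by (rule form_eqI[OF assms(1,2)]) (use assms(3-) in \<open>auto simp: le_Suc_eq\<close>)

lemma form02_eqI:
  assumes "is_form 0 2 f" "is_form 0 2 g" "f 0 0 = g 0 0" "f 0 1 = g 0 1" "f 0 2 = g 0 2"
  shows "f = g"
  by (rule form_eqI[OF assms(1,2)]) (use assms(3-) in \<open>auto simp: le_Suc_eq numeral_2_eq_2\<close>)

lemma form22_eqI:
  assumes "is_form 2 2 f" "is_form 2 2 g"
    and "f 0 0 = g 0 0" "f 0 1 = g 0 1" "f 0 2 = g 0 2"
    and "f 1 0 = g 1 0" "f 1 1 = g 1 1" "f 1 2 = g 1 2"
    and "f 2 0 = g 2 0" "f 2 1 = g 2 1" "f 2 2 = g 2 2"
  shows "f = g"
  by (rule form_eqI[OF assms(1,2)]) (use assms(3-) in \<open>auto simp: le_Suc_eq numeral_2_eq_2\<close>)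

lemma fmul_commute: "fmul f g = fmul g (f :: nat \<Rightarrow> nat \<Rightarrow> 'a::comm_semiring_1)"
proof (intro ext)
  fix i j
  have "fmul f g i j = (\<Sum>i1\<le>i. \<Sum>j1\<le>j. g (i - i1) (j - j1) * f i1 j1)"
    by (simp add: fmul_def mult.commute)
  also have "\<dots> = (\<Sum>i1\<le>i. \<Sum>j1\<le>j. g i1 (j - j1) * f (i - i1) j1)"
    by (rule sum.reindex_bij_witness[of _ "\<lambda>k. i - k" "\<lambda>k. i - k"]) auto
  also have "\<dots> = (\<Sum>i1\<le>i. \<Sum>j1\<le>j. g i1 j1 * f (i - i1) (j - j1))"
    by (rule sum.cong[OF refl], rule sum.reindex_bij_witness[of _ "\<lambda>k. j - k" "\<lambda>k. j - k"]) auto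
  finally show "fmul f g i j = fmul g f i j"
    by (simp add: fmul_def)
qed

lemma is_form_fmul:
  assumes "is_form a b f" "is_form c d g"
  shows "is_form (a + c) (b + d) (fmul f g)"
  unfolding is_form_def
proof (intro allI impI)
  fix i j
  assume "a + c < i \<or> b + d < j"
  then have "f i1 j1 * g (i - i1) (j - j1) = 0" if "i1 \<le> i" "j1 \<le> j" for i1 j1
  proof -
    have "a < i1 \<or> b < j1 \<or> c < i - i1 \<or> d < j - j1"
      using \<open>a + c < i \<or> b + d < j\<close> that by auto
    then show ?thesis
      using is_formD[OF assms(1)] is_formD[OF assms(2)] by auto
  qed
  then show "fmul f g i j = 0"
    unfolding fmul_def by simp
qed

lemma fmul_fscale_left:
  "fmul (fscale c f) g = fscale c (fmul f (g :: nat \<Rightarrow> nat \<Rightarrow> 'a::comm_semiring_1))"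
  by (simp add: fmul_def fscale_def sum_distrib_left mult_ac)

lemma fmul_fscale_right:
  "fmul f (fscale c g) = fscale c (fmul f (g :: nat \<Rightarrow> nat \<Rightarrow> 'a::comm_semiring_1))"
  by (simp add: fmul_def fscale_def sum_distrib_left mult_ac)

lemma fscale_fscale: "fscale c (fscale d f) = fscale (c * d) (f :: nat \<Rightarrow> nat \<Rightarrow> 'a::comm_semiring_1)"
  by (simp add: fscale_def mult_ac)

lemma fscale_one [simp]: "fscale 1 (f :: nat \<Rightarrow> nat \<Rightarrow> 'a::monoid_mult) = f"
  by (simp add: fscale_def)

lemma is_form_fscale: "is_form a b f \<Longrightarrow> is_form a b (fscale c (f :: nat \<Rightarrow> nat \<Rightarrow> 'a::mult_zero))"
  by (simp add: is_form_def fscale_def)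

text \<open>As polynomials: \<open>x1_form = X\<^sub>1\<close>, \<open>ylin m = Y\<^sub>0 + m Y\<^sub>1\<close>,
  \<open>yquad u v = Y\<^sub>0\<^sup>2 + u Y\<^sub>0Y\<^sub>1 + v Y\<^sub>1\<^sup>2\<close>, \<open>x1sq_yquad u v = X\<^sub>1\<^sup>2 yquad u v\<close> and
  \<open>normal11 g h = X\<^sub>1Y\<^sub>0 + g X\<^sub>0Y\<^sub>1 + h X\<^sub>1Y\<^sub>1\<close>.\<close>

definition x1_form :: "nat \<Rightarrow> nat \<Rightarrow> 'a::zero_neq_one" where
  "x1_form = (\<lambda>i j. if i = 1 \<and> j = 0 then 1 else 0)"

definition ylin :: "'a::zero_neq_one \<Rightarrow> nat \<Rightarrow> nat \<Rightarrow> 'a" where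
  "ylin m = (\<lambda>i j. if i = 0 \<and> j = 0 then 1 else if i = 0 \<and> j = 1 then m else 0)"

definition yquad :: "'a::zero_neq_one \<Rightarrow> 'a \<Rightarrow> nat \<Rightarrow> nat \<Rightarrow> 'a" where
  "yquad u v = (\<lambda>i j. if i = 0 \<and> j = 0 then 1 else if i = 0 \<and> j = 1 then u
                      else if i = 0 \<and> j = 2 then v else 0)"

definition x1sq_yquad :: "'a::zero_neq_one \<Rightarrow> 'a \<Rightarrow> nat \<Rightarrow> nat \<Rightarrow> 'a" where
  "x1sq_yquad u v = (\<lambda>i j. if i = 2 then yquad u v 0 j else 0)"

definition normal11 :: "'a::zero_neq_one \<Rightarrow> 'a \<Rightarrow> nat \<Rightarrow> nat \<Rightarrow> 'a" where
  "normal11 g h = (\<lambda>i j. if i = 0 \<and> j = 1 then g else if i = 1 \<and> j = 0 then 1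
                        else if i = 1 \<and> j = 1 then h else 0)"

lemma is_form_x1_form: "is_form 1 0 x1_form"
  and is_form_ylin: "is_form 0 1 (ylin m)"
  and is_form_yquad: "is_form 0 2 (yquad u v)"
  and is_form_x1sq_yquad: "is_form 2 2 (x1sq_yquad u v)"
  and is_form_normal11: "is_form 1 1 (normal11 g h)"
  by (auto simp: is_form_def x1_form_def ylin_def yquad_def x1sq_yquad_def normal11_def)

lemma x1_form_nonzero: "x1_form \<noteq> (\<lambda>i j. 0)"
  and ylin_nonzero: "ylin m \<noteq> (\<lambda>i j. 0)"
  and yquad_nonzero: "yquad u v \<noteq> (\<lambda>i j. 0)"
  and normal11_nonzero: "normal11 g h \<noteq> (\<lambda>i j. 0)"
  by (metis x1_form_def zero_neq_one, metis ylin_def zero_neq_one, metis yquad_def zero_neq_one,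
      metis normal11_def zero_neq_one)

lemma fmul_ylin_ylin: "fmul (ylin s) (ylin t) = yquad (s + t) (s * (t :: 'a::comm_semiring_1))"
proof -
  have "is_form 0 2 (fmul (ylin s) (ylin t))"
    using is_form_fmul[OF is_form_ylin is_form_ylin] by (simp add: numeral_2_eq_2)
  then show ?thesis
    by (rule form02_eqI[OF _ is_form_yquad])
       (simp_all add: fmul_def sum_atMost_small ylin_def yquad_def add.commute)
qed

lemma fmul_ylin_ylin_same: "fmul (ylin m) (ylin m) = yquad (2 * m) (m * (m :: 'a::comm_semiring_1))"
  by (simp add: fmul_ylin_ylin mult_2)

lemma fmul_yquad_x1_x1:
  "fmul (yquad u v) (fmul x1_form x1_form) = x1sq_yquad u (v :: 'a::comm_semiring_1)"
proof -
  have "is_form 2 2 (fmul (yquad u v) (fmul x1_form x1_form))"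
    using is_form_fmul[OF is_form_yquad is_form_fmul[OF is_form_x1_form is_form_x1_form]]
    by (simp add: numeral_2_eq_2)
  then show ?thesis
    by (rule form22_eqI[OF _ is_form_x1sq_yquad])
       (simp_all add: fmul_def sum_atMost_small yquad_def x1_form_def x1sq_yquad_def)
qed

lemma x1sq_yquad_coeffs:
  "x1sq_yquad u v 0 0 = 0" "x1sq_yquad u v 0 1 = 0" "x1sq_yquad u v 1 0 = 0"
  "x1sq_yquad u v 2 0 = 1" "x1sq_yquad u v 0 2 = 0" "x1sq_yquad u v 2 1 = u" "x1sq_yquad u v 2 2 = v"
  by (simp_all add: x1sq_yquad_def yquad_def)

lemma x1sq_yquad_in_sing_forms: "x1sq_yquad u v \<in> sing_forms"
  using is_form_x1sq_yquad[of u v] by (simp add: sing_forms_def x1sq_yquad_def yquad_def)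

lemma x1sq_yquad_inject: "x1sq_yquad u v = x1sq_yquad u' v' \<Longrightarrow> u = u' \<and> v = v'"
  by (metis x1sq_yquad_coeffs(6,7))

lemma fmul_normal11_normal11_coeffs:
  "fmul (normal11 g h) (normal11 g h) 0 0 = 0" "fmul (normal11 g h) (normal11 g h) 0 1 = 0"
  "fmul (normal11 g h) (normal11 g h) 1 0 = 0" "fmul (normal11 g h) (normal11 g h) 2 0 = 1"
  "fmul (normal11 g h) (normal11 g h) 0 2 = g * g" "fmul (normal11 g h) (normal11 g h) 1 1 = 2 * g"
  "fmul (normal11 g h) (normal11 g h) 2 1 = 2 * h" "fmul (normal11 g h) (normal11 g h) 2 2 = h * h"
  by (simp_all add: fmul_def sum_atMost_small normal11_def mult_2)

lemma form10_eq_fscale_x1_form: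
  fixes L :: "nat \<Rightarrow> nat \<Rightarrow> 'a::comm_semiring_1"
  assumes "is_form 1 0 L" "L 0 0 = 0"
  shows "L = fscale (L 1 0) x1_form"
  by (rule form_eqI[OF assms(1) is_form_fscale[OF is_form_x1_form]])
     (use assms(2) in \<open>auto simp: fscale_def x1_form_def le_Suc_eq\<close>)

lemma form01_eq_fscale_ylin:
  assumes "is_form 0 1 M" "(M 0 0 :: 'a::field) \<noteq> 0"
  shows "M = fscale (M 0 0) (ylin (M 0 1 / M 0 0))"
  by (rule form_eqI[OF assms(1) is_form_fscale[OF is_form_ylin]])
     (use assms(2) in \<open>auto simp: fscale_def ylin_def le_Suc_eq\<close>)

lemma form02_eq_fscale_yquad:
  assumes "is_form 0 2 A" "(A 0 0 :: 'a::field) \<noteq> 0"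
  shows "A = fscale (A 0 0) (yquad (A 0 1 / A 0 0) (A 0 2 / A 0 0))"
  by (rule form02_eqI[OF assms(1) is_form_fscale[OF is_form_yquad]])
     (use assms(2) in \<open>simp_all add: fscale_def yquad_def\<close>)

lemma form11_eq_fscale_normal11:
  assumes "is_form 1 1 G" "G 0 0 = 0" "(G 1 0 :: 'a::field) \<noteq> 0"
  shows "G = fscale (G 1 0) (normal11 (G 0 1 / G 1 0) (G 1 1 / G 1 0))"
  by (rule form11_eqI[OF assms(1) is_form_fscale[OF is_form_normal11]])
     (use assms(2,3) in \<open>simp_all add: fscale_def normal11_def\<close>)

lemma irred_formI:
  assumes "is_form d1 d2 F" "F \<noteq> (\<lambda>i j. 0)" "(d1, d2) \<noteq> (0, 0)"
    and "\<And>e1 e2 G H. e1 \<le> d1 \<Longrightarrow> e2 \<le> d2 \<Longrightarrow> (e1, e2) \<noteq> (0, 0) \<Longrightarrow> (e1, e2) \<noteq> (d1, d2) \<Longrightarrow>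
      is_form e1 e2 G \<Longrightarrow> is_form (d1 - e1) (d2 - e2) H \<Longrightarrow> F = fmul G H \<Longrightarrow> False"
  shows "irred_form d1 d2 F"
  using assms unfolding irred_form_def by blast

lemma irred_formD:
  assumes "irred_form d1 d2 F" "e1 \<le> d1" "e2 \<le> d2" "(e1, e2) \<noteq> (0, 0)" "(e1, e2) \<noteq> (d1, d2)"
    "is_form e1 e2 G" "is_form (d1 - e1) (d2 - e2) H" "F = fmul G H"
  shows False
  using assms unfolding irred_form_def by blast

lemma irred_form_fscale:
  assumes irr: "irred_form d1 d2 (fscale c F)" and c: "(c::'a::field) \<noteq> 0"
  shows "irred_form d1 d2 F"
proof (rule irred_formI)
  have "F = fscale (inverse c) (fscale c F)"
    using c by (simp add: fscale_fscale)
  then show "is_form d1 d2 F"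
    using irr is_form_fscale unfolding irred_form_def by metis
  show "F \<noteq> (\<lambda>i j. 0)" and "(d1, d2) \<noteq> (0, 0)"
    using irr unfolding irred_form_def fscale_def by auto
  fix e1 e2 G H
  assume "e1 \<le> d1" "e2 \<le> d2" "(e1, e2) \<noteq> (0, 0)" "(e1, e2) \<noteq> (d1, d2)"
    and fG: "is_form e1 e2 G" and fH: "is_form (d1 - e1) (d2 - e2) H" and "F = fmul G H"
  moreover from \<open>F = fmul G H\<close> have "fscale c F = fmul (fscale c G) H"
    by (simp add: fmul_fscale_left)
  ultimately show False
    using irred_formD[OF irr _ _ _ _ is_form_fscale[OF fG] fH] by blast
qed

text \<open>In the next three lemmas a vanishing coefficient would split off the factor \<open>X\<^sub>1\<close> or \<open>Y\<^sub>1\<close>.\<close>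

lemma irred_form_20_coeff_00:
  assumes "irred_form 2 0 (A :: nat \<Rightarrow> nat \<Rightarrow> 'a::field)"
  shows "A 0 0 \<noteq> 0"
proof
  assume A00: "A 0 0 = 0"
  have fA: "is_form 2 0 A"
    using assms by (simp add: irred_form_def)
  define B :: "nat \<Rightarrow> nat \<Rightarrow> 'a" where "B = (\<lambda>i j. if j = 0 \<and> i < 2 then A (Suc i) 0 else 0)"
  have fB: "is_form 1 0 B"
    by (auto simp: is_form_def B_def)
  have fX1B: "is_form 2 0 (fmul x1_form B)"
    using is_form_fmul[OF is_form_x1_form fB] by (simp add: numeral_2_eq_2)
  have "A = fmul x1_form B"
    by (rule form_eqI[OF fA fX1B])
       (use A00 in \<open>auto simp: le_Suc_eq numeral_2_eq_2 fmul_def x1_form_def B_def\<close>)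
  then show False
    using irred_formD[OF assms, of 1 0 x1_form B] is_form_x1_form fB by simp
qed

lemma irred_form_02_coeff_00:
  assumes "irred_form 0 2 (A :: nat \<Rightarrow> nat \<Rightarrow> 'a::field)"
  shows "A 0 0 \<noteq> 0"
proof
  assume A00: "A 0 0 = 0"
  have fA: "is_form 0 2 A"
    using assms by (simp add: irred_form_def)
  define Y1 :: "nat \<Rightarrow> nat \<Rightarrow> 'a" where "Y1 = (\<lambda>i j. if i = 0 \<and> j = 1 then 1 else 0)"
  define B :: "nat \<Rightarrow> nat \<Rightarrow> 'a"
    where "B = (\<lambda>i j. if i = 0 \<and> j = 0 then A 0 1 else if i = 0 \<and> j = 1 then A 0 2 else 0)"
  have fY1: "is_form 0 1 Y1" and fB: "is_form 0 1 B"
    by (auto simp: is_form_def Y1_def B_def)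
  have fY1B: "is_form 0 2 (fmul Y1 B)"
    using is_form_fmul[OF fY1 fB] by (simp add: numeral_2_eq_2)
  have "A = fmul Y1 B"
    by (rule form02_eqI[OF fA fY1B])
       (use A00 in \<open>simp_all add: fmul_def sum_atMost_small Y1_def B_def\<close>)
  then show False
    using irred_formD[OF assms, of 0 1 Y1 B] fY1 fB by simp
qed

lemma irred_form_11_coeff_01:
  assumes "irred_form 1 1 (G :: nat \<Rightarrow> nat \<Rightarrow> 'a::field)" "G 0 0 = 0"
  shows "G 0 1 \<noteq> 0"
proof
  assume G01: "G 0 1 = 0"
  have fG: "is_form 1 1 G"
    using assms by (simp add: irred_form_def)
  define B :: "nat \<Rightarrow> nat \<Rightarrow> 'a" where "B = (\<lambda>i j. if i = 0 \<and> j < 2 then G 1 j else 0)"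
  have fB: "is_form 0 1 B"
    by (auto simp: is_form_def B_def)
  have fX1B: "is_form 1 1 (fmul x1_form B)"
    using is_form_fmul[OF is_form_x1_form fB] by simp
  have "G = fmul x1_form B"
    by (rule form11_eqI[OF fG fX1B])
       (use assms(2) G01 in \<open>simp_all add: fmul_def sum_atMost_small x1_form_def B_def\<close>)
  then show False
    using irred_formD[OF assms(1), of 1 0 x1_form B] is_form_x1_form fB by simp
qed

definition fnormalize :: "(nat \<Rightarrow> nat \<Rightarrow> 'a::field) \<Rightarrow> nat \<Rightarrow> nat \<Rightarrow> 'a" where
  "fnormalize a = fscale (inverse (a 2 0)) a"

definition scale_class :: "(nat \<Rightarrow> nat \<Rightarrow> 'a::field) \<Rightarrow> (nat \<Rightarrow> nat \<Rightarrow> 'a) set" where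
  "scale_class a = {fscale c a | c. c \<noteq> 0}"

lemma scale_classes_eq_image: "scale_classes A = scale_class ` A"
  by (simp add: scale_classes_def scale_class_def)

lemma fnormalize_fscale: "(c::'a::field) \<noteq> 0 \<Longrightarrow> fnormalize (fscale c a) = fnormalize a"
  by (simp add: fnormalize_def fscale_def fun_eq_iff)

lemma fnormalize_eq_self: "a 2 0 = 1 \<Longrightarrow> fnormalize a = a"
  by (simp add: fnormalize_def)

lemma fnormalize_eqI: "a = fscale c b \<Longrightarrow> (c::'a::field) \<noteq> 0 \<Longrightarrow> b 2 0 = 1 \<Longrightarrow> fnormalize a = b"
  by (simp add: fnormalize_fscale fnormalize_eq_self)

lemma fscale_fnormalize: "a 2 0 \<noteq> 0 \<Longrightarrow> a = fscale (a 2 0) (fnormalize a)"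
  by (simp add: fnormalize_def fscale_fscale)

lemma fnormalize_coeff_eq_0_iff: "a 2 0 \<noteq> 0 \<Longrightarrow> fnormalize a i j = 0 \<longleftrightarrow> a i j = 0"
  by (simp add: fnormalize_def fscale_def)

lemma scale_class_fscale:
  assumes "(d::'a::field) \<noteq> 0"
  shows "scale_class (fscale d a) = scale_class a"
proof (intro equalityI subsetI)
  fix b assume "b \<in> scale_class (fscale d a)"
  then show "b \<in> scale_class a"
    using assms by (auto simp: scale_class_def fscale_fscale)
next
  fix b assume "b \<in> scale_class a"
  then obtain c where "c \<noteq> 0" "b = fscale c a"
    by (auto simp: scale_class_def)
  then have "c / d \<noteq> 0" "b = fscale (c / d) (fscale d a)"
    using assms by (simp_all add: fscale_fscale)
  then show "b \<in> scale_class (fscale d a)"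
    unfolding scale_class_def by blast
qed

lemma scale_class_fnormalize: "a 2 0 \<noteq> 0 \<Longrightarrow> scale_class (fnormalize a) = scale_class a"
  unfolding fnormalize_def by (simp add: scale_class_fscale)

lemma inj_on_scale_class: "inj_on scale_class {b. b 2 0 = (1::'a::field)}"
proof (rule inj_onI)
  fix a b :: "nat \<Rightarrow> nat \<Rightarrow> 'a"
  assume a: "a \<in> {b. b 2 0 = 1}" and b: "b \<in> {b. b 2 0 = 1}"
    and eq: "scale_class a = scale_class b"
  have "b \<in> scale_class b"
    unfolding scale_class_def by (auto intro: exI[of _ 1])
  then have "b \<in> scale_class a"
    by (simp add: eq)
  then obtain c where c: "b = fscale c a"
    unfolding scale_class_def by blast
  then have "c = 1"
    using a b by (simp add: fscale_def)
  then show "a = b"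
    using c by simp
qed

lemma card_scale_classes:
  assumes "\<And>a. a \<in> A \<Longrightarrow> a 2 0 \<noteq> 0"
    and "\<And>a. a \<in> A \<Longrightarrow> \<exists>x\<in>D. fnormalize a = f x"
    and "\<And>x. x \<in> D \<Longrightarrow> f x \<in> A" "\<And>x. x \<in> D \<Longrightarrow> f x 2 0 = 1"
  shows "card (scale_classes A) = card (f ` D)"
proof -
  have "scale_classes A = scale_class ` f ` D"
    unfolding scale_classes_eq_image
  proof (intro equalityI subsetI)
    fix C assume "C \<in> scale_class ` A"
    then obtain a where a: "a \<in> A" "C = scale_class a"
      by blast
    then obtain x where "x \<in> D" "fnormalize a = f x"
      using assms(2) by blast
    moreover have "C = scale_class (fnormalize a)"
      using a scale_class_fnormalize assms(1) by metis
    ultimately show "C \<in> scale_class ` f ` D"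
      by simp
  qed (use assms(3) in blast)
  moreover have "inj_on scale_class (f ` D)"
    by (rule inj_on_subset[OF inj_on_scale_class]) (use assms(4) in blast)
  ultimately show ?thesis
    by (simp add: card_image)
qed

lemma sing_forms_coeff_20: "a \<in> sing_forms \<Longrightarrow> a 2 0 \<noteq> 0"
  by (simp add: sing_forms_def)

lemma card_scale_classes_sing_forms:
  assumes "\<And>a. a \<in> sing_forms \<Longrightarrow> P a \<Longrightarrow> \<exists>x\<in>D. fnormalize a = f x"
    and "\<And>x. x \<in> D \<Longrightarrow> f x \<in> sing_forms \<and> P (f x) \<and> f x 2 0 = 1"
  shows "card (scale_classes {a \<in> sing_forms. P a}) = card (f ` D)"
  by (rule card_scale_classes) (use assms sing_forms_coeff_20 in auto)

lemma card_eq_double_card_image: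
  assumes "finite D" and "\<And>x. x \<in> D \<Longrightarrow> s x \<in> D" and "\<And>x. x \<in> D \<Longrightarrow> s x \<noteq> x"
    and "\<And>x. x \<in> D \<Longrightarrow> f (s x) = f x"
    and "\<And>x y. x \<in> D \<Longrightarrow> y \<in> D \<Longrightarrow> f x = f y \<Longrightarrow> y = x \<or> y = s x"
  shows "card D = 2 * card (f ` D)"
proof -
  have D: "D = (\<Union>b\<in>f ` D. {x \<in> D. f x = b})"
    by auto
  have "card D = (\<Sum>b\<in>f ` D. card {x \<in> D. f x = b})"
    by (subst D, rule card_UN_disjoint) (use assms(1) in auto)
  also have "\<dots> = (\<Sum>b\<in>f ` D. 2)"
  proof (rule sum.cong[OF refl])
    fix b assume "b \<in> f ` D"
    then obtain x where x: "x \<in> D" "b = f x"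
      by auto
    have "{y \<in> D. f y = b} = {x, s x}"
      using x assms(2,4) assms(5)[OF x(1)] by (auto simp: eq_commute[of "f x"])
    then show "card {y \<in> D. f y = b} = 2"
      using assms(3)[OF x(1)] by simp
  qed
  finally show ?thesis
    by simp
qed

lemma card_UNIV_prod: "card (UNIV :: ('a \<times> 'b) set) = card (UNIV :: 'a set) * card (UNIV :: 'b set)"
  by (simp flip: card_cartesian_product)

definition sing_form_of :: "'a \<times> 'a \<times> 'a \<times> 'a \<times> 'a \<Rightarrow> nat \<Rightarrow> nat \<Rightarrow> 'a::zero_neq_one" where
  "sing_form_of = (\<lambda>(a02, a11, a12, a21, a22) i j.
     if (i, j) = (2, 0) then 1 else if (i, j) = (0, 2) then a02 else if (i, j) = (1, 1) then a11
     else if (i, j) = (1, 2) then a12 else if (i, j) = (2, 1) then a21 else if (i, j) = (2, 2) then a22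
     else 0)"

lemma is_form_sing_form_of: "is_form 2 2 (sing_form_of x)"
  by (cases x) (simp add: is_form_def sing_form_of_def)

lemma sing_form_of_in_sing_forms: "sing_form_of x \<in> sing_forms"
  by (cases x) (simp add: sing_forms_def is_form_sing_form_of, simp add: sing_form_of_def)

lemma sing_form_of_coeff_20: "sing_form_of x 2 0 = 1"
  by (cases x) (simp add: sing_form_of_def)

lemma inj_sing_form_of: "inj sing_form_of"
proof (rule injI)
  fix x y :: "'a \<times> 'a \<times> 'a \<times> 'a \<times> 'a"
  assume eq: "sing_form_of x = sing_form_of y"
  have "sing_form_of x i j = sing_form_of y i j" for i j
    using eq by simp
  from this[of 0 2] this[of 1 1] this[of 1 2] this[of 2 1] this[of 2 2] show "x = y"
    by (cases x, cases y) (simp add: sing_form_of_def)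
qed

lemma fnormalize_in_range_sing_form_of:
  assumes "a \<in> sing_forms"
  shows "fnormalize a \<in> range sing_form_of"
proof -
  have fa: "is_form 2 2 (fnormalize a)"
    using assms by (simp add: sing_forms_def fnormalize_def is_form_fscale)
  have "fnormalize a = sing_form_of (fnormalize a 0 2, fnormalize a 1 1, fnormalize a 1 2,
      fnormalize a 2 1, fnormalize a 2 2)"
    by (rule form22_eqI[OF fa is_form_sing_form_of])
       (use assms in \<open>simp_all add: sing_forms_def sing_form_of_def fnormalize_def fscale_def\<close>)
  then show ?thesis
    by (rule range_eqI)
qed

lemma card_sing_classes:
  "card (scale_classes (sing_forms :: (nat \<Rightarrow> nat \<Rightarrow> 'a::{field,finite}) set))
     = card (UNIV :: 'a set) ^ 5"
proof -
  have "card (scale_classes (sing_forms :: (nat \<Rightarrow> nat \<Rightarrow> 'a) set))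
      = card (range (sing_form_of :: 'a \<times> 'a \<times> 'a \<times> 'a \<times> 'a \<Rightarrow> _))"
  proof (rule card_scale_classes)
    fix a :: "nat \<Rightarrow> nat \<Rightarrow> 'a"
    assume "a \<in> sing_forms"
    then show "\<exists>x\<in>UNIV. fnormalize a = sing_form_of x"
      using fnormalize_in_range_sing_form_of by blast
  qed (simp_all add: sing_forms_coeff_20 sing_form_of_in_sing_forms sing_form_of_coeff_20)
  also have "\<dots> = card (UNIV :: ('a \<times> 'a \<times> 'a \<times> 'a \<times> 'a) set)"
    by (rule card_image[OF inj_sing_form_of])
  finally show ?thesis
    by (simp add: card_UNIV_prod eval_nat_numeral)
qed

section \<open>Cases 2 to 5 over an arbitrary field\<close>

lemma sing_form_not_case2: "a \<in> sing_forms \<Longrightarrow> \<not> case2 a"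
  by (auto simp: case2_def sing_forms_def fmul_def dest: irred_form_20_coeff_00 irred_form_02_coeff_00)

definition sum_prod :: "'a \<times> 'a \<Rightarrow> 'a \<times> 'a::comm_semiring_1" where
  "sum_prod = (\<lambda>(s, t). (s + t, s * t))"

lemma sum_prod_eqD:
  fixes s t :: "'a::idom"
  assumes "sum_prod (s, t) = sum_prod (s', t')"
  shows "(s', t') = (s, t) \<or> (s', t') = (t, s)"
proof -
  have "s + t = s' + t'" "s * t = s' * t'"
    using assms by (simp_all add: sum_prod_def)
  moreover have "(s' - s) * (s' - t) = s' * s' - (s + t) * s' + s * t"
    by (simp add: algebra_simps)
  ultimately have "(s' - s) * (s' - t) = 0"
    by (simp add: algebra_simps)
  then show ?thesis
    using \<open>s + t = s' + t'\<close> by auto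
qed

lemma inj_sum_prod_diag: "inj (\<lambda>s :: 'a::idom. sum_prod (s, s))"
proof (rule injI)
  fix s t :: 'a
  assume "sum_prod (s, s) = sum_prod (t, t)"
  then have "s * s = t * t" "s + s = t + t"
    by (simp_all add: sum_prod_def)
  then show "s = t"
    using eq_if_square_eq_and_double_eq[of s t] by (simp only: mult_2)
qed

lemma card_sum_prod_off_diag:
  "card {x :: 'a \<times> 'a. fst x \<noteq> snd x}
     = 2 * card (sum_prod ` {x :: 'a::{idom,finite} \<times> 'a. fst x \<noteq> snd x})"
proof (rule card_eq_double_card_image[where s = prod.swap])
  fix x :: "'a \<times> 'a"
  show "sum_prod (prod.swap x) = sum_prod x"
    by (cases x) (simp add: sum_prod_def add.commute mult.commute)
next
  fix x y :: "'a \<times> 'a"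
  assume "sum_prod x = sum_prod y"
  then show "y = x \<or> y = prod.swap x"
    using sum_prod_eqD[of "fst x" "snd x" "fst y" "snd y"] by (cases x, cases y) simp
qed auto

lemma card_range_sum_prod:
  "2 * card (range (sum_prod :: 'a \<times> 'a \<Rightarrow> 'a \<times> 'a::{idom,finite}))
     = card (UNIV :: 'a set) ^ 2 + card (UNIV :: 'a set)"
proof -
  define q where "q = card (UNIV :: 'a set)"
  define Diag :: "('a \<times> 'a) set" where "Diag = {x. fst x = snd x}"
  define Off :: "('a \<times> 'a) set" where "Off = {x. fst x \<noteq> snd x}"
  have Diag_range: "Diag = range (\<lambda>s. (s, s))"
    by (auto simp: Diag_def image_iff intro: prod_eqI)
  then have card_Diag: "card Diag = q"
    unfolding q_def by (simp add: card_image inj_on_def)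
  have "Off = UNIV - Diag"
    by (auto simp: Off_def Diag_def)
  then have "card Off = q ^ 2 - q"
    using card_Diag by (simp add: card_Diff_subset card_UNIV_prod q_def power2_eq_square)
  moreover have "card Off = 2 * card (sum_prod ` Off)"
    unfolding Off_def by (rule card_sum_prod_off_diag)
  moreover have "card (sum_prod ` Diag) = q"
    unfolding Diag_range image_image q_def by (rule card_image[OF inj_sum_prod_diag])
  moreover have "sum_prod ` Off \<inter> sum_prod ` Diag = {}"
  proof -
    have "sum_prod x \<noteq> sum_prod y" if "x \<in> Off" "y \<in> Diag" for x y
      using that sum_prod_eqD[of "fst y" "snd y" "fst x" "snd x"]
      by (cases x, cases y) (auto simp: Off_def Diag_def)
    then show ?thesis
      by blast
  qed
  moreover have "range sum_prod = sum_prod ` Off \<union> sum_prod ` Diag"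
  proof -
    have "UNIV = Off \<union> Diag"
      by (auto simp: Off_def Diag_def)
    then show ?thesis
      by (metis image_Un)
  qed
  moreover have "q \<le> q ^ 2"
    by (simp add: power2_eq_square)
  ultimately show ?thesis
    using card_Un_disjoint[of "sum_prod ` Off" "sum_prod ` Diag"] unfolding q_def[symmetric]
    by simp
qed

lemma yquad_coeffs: "yquad u v 0 0 = 1" "yquad u v 0 1 = u" "yquad u v 0 2 = v"
  by (simp_all add: yquad_def)

lemma yquad_inject: "yquad u v = yquad u' v' \<Longrightarrow> u = u' \<and> v = v'"
  by (metis yquad_coeffs(2,3))

lemma yquad_eq_fmul_01:
  assumes fG: "is_form 0 1 G" and fH: "is_form 0 1 H" and eq: "yquad u v = fmul G H"
  shows "(u, v) \<in> range (sum_prod :: 'a \<times> 'a \<Rightarrow> 'a::field \<times> 'a)"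
proof -
  have "G 0 0 * H 0 0 = 1"
    using fun_cong[OF fun_cong[OF eq, of 0], of 0] by (simp add: fmul_def yquad_def)
  then have G00: "G 0 0 \<noteq> 0" and H00: "H 0 0 \<noteq> 0" and GH: "G 0 0 * H 0 0 = 1"
    by auto
  define s where "s = G 0 1 / G 0 0"
  define t where "t = H 0 1 / H 0 0"
  have "fmul G H = fmul (fscale (G 0 0) (ylin s)) (fscale (H 0 0) (ylin t))"
    using arg_cong2[where f = fmul, OF form01_eq_fscale_ylin[OF fG G00]
        form01_eq_fscale_ylin[OF fH H00]] by (simp add: s_def t_def)
  also have "\<dots> = yquad (s + t) (s * t)"
    by (simp add: fmul_fscale_left fmul_fscale_right fscale_fscale GH fmul_ylin_ylin
        mult.commute[of "H 0 0"])
  finally have "(u, v) = sum_prod (s, t)"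
    using eq by (auto simp: sum_prod_def dest: yquad_inject)
  then show ?thesis
    by (metis rangeI)
qed

lemma irred_yquad_iff:
  "irred_form 0 2 (yquad u v) \<longleftrightarrow> (u, v) \<notin> range (sum_prod :: 'a \<times> 'a \<Rightarrow> 'a::field \<times> 'a)"
proof
  assume irr: "irred_form 0 2 (yquad u v)"
  show "(u, v) \<notin> range sum_prod"
  proof
    assume "(u, v) \<in> range sum_prod"
    then obtain s t where "u = s + t" "v = s * t"
      by (auto simp: sum_prod_def)
    then have "yquad u v = fmul (ylin s) (ylin t)"
      by (simp add: fmul_ylin_ylin)
    then show False
      using is_form_ylin[of s] is_form_ylin[of t] irred_formD[OF irr, of 0 1 "ylin s" "ylin t"] by simp
  qed
next
  assume uv: "(u, v) \<notin> range sum_prod"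
  show "irred_form 0 2 (yquad u v)"
  proof (rule irred_formI[OF is_form_yquad yquad_nonzero], simp)
    fix e1 e2 G H
    assume "e1 \<le> 0" "e2 \<le> 2" "(e1, e2) \<noteq> (0, 0)" "(e1, e2) \<noteq> (0, 2)"
      and "is_form e1 e2 G" "is_form (0 - e1) (2 - e2) H" "yquad u v = fmul G H"
    then have "is_form 0 1 G" "is_form 0 1 H" "yquad u v = fmul G H"
      by (simp_all add: le_Suc_eq numeral_2_eq_2 prod_eq_iff)
    then show False
      using uv yquad_eq_fmul_01 by blast
  qed
qed

lemma case3_factors:
  assumes "a \<in> sing_forms" "case3 (a :: nat \<Rightarrow> nat \<Rightarrow> 'a::field)"
  obtains c A L where "c \<noteq> 0" "a = fscale c (fmul A (fmul L L))" "irred_form 0 2 A" "is_form 1 0 L"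
    "A 0 0 \<noteq> 0" "L 0 0 = 0" "L 1 0 \<noteq> 0"
proof -
  obtain c A L where c: "c \<noteq> 0" and L: "L \<noteq> (\<lambda>i j. 0)" and a: "a = fscale c (fmul A (fmul L L))"
    and alt: "(irred_form 2 0 A \<and> is_form 0 1 L) \<or> (irred_form 0 2 A \<and> is_form 1 0 L)"
    using assms(2) unfolding case3_def by blast
  have a00: "a 0 0 = 0" and a20: "a 2 0 \<noteq> 0"
    using assms(1) by (simp_all add: sing_forms_def)
  have A00: "A 0 0 \<noteq> 0"
    using alt irred_form_20_coeff_00 irred_form_02_coeff_00 by blast
  have "a 0 0 = c * (A 0 0 * (L 0 0 * L 0 0))"
    by (simp add: a fscale_def fmul_def)
  then have L00: "L 0 0 = 0"
    using a00 c A00 by simp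
  have "irred_form 0 2 A \<and> is_form 1 0 L"
  proof (rule ccontr)
    assume "\<not> (irred_form 0 2 A \<and> is_form 1 0 L)"
    then have fA: "is_form 2 0 A" and fL: "is_form 0 1 L"
      using alt by (auto simp: irred_form_def)
    have "a 2 0 = c * (A 2 0 * (L 0 0 * L 0 0))"
      by (simp add: a fscale_def fmul_def sum_atMost_small is_formD[OF fA] is_formD[OF fL])
    then show False
      using a20 L00 by simp
  qed
  moreover have "L 1 0 \<noteq> 0"
  proof
    assume "L 1 0 = 0"
    then have "L = fscale 0 x1_form"
      using form10_eq_fscale_x1_form[of L] L00 \<open>irred_form 0 2 A \<and> is_form 1 0 L\<close> by metis
    then show False
      using L by (simp add: fscale_def)
  qed
  ultimately show thesis
    using that c a A00 L00 by blast
qed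

lemma case3_imp_normal_form:
  assumes "a \<in> sing_forms" "case3 (a :: nat \<Rightarrow> nat \<Rightarrow> 'a::field)"
  shows "\<exists>u v. (u, v) \<notin> range sum_prod \<and> fnormalize a = x1sq_yquad u v"
proof -
  obtain c A L where c: "c \<noteq> 0" and a: "a = fscale c (fmul A (fmul L L))" and irrA: "irred_form 0 2 A"
    and fL: "is_form 1 0 L" and A00: "A 0 0 \<noteq> 0" and L00: "L 0 0 = 0" and L10: "L 1 0 \<noteq> 0"
    using case3_factors[OF assms] by blast
  define u where "u = A 0 1 / A 0 0"
  define v where "v = A 0 2 / A 0 0"
  have "is_form 0 2 A"
    using irrA by (simp add: irred_form_def)
  then have A: "A = fscale (A 0 0) (yquad u v)"
    unfolding u_def v_def using A00 by (rule form02_eq_fscale_yquad)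
  have L: "L = fscale (L 1 0) x1_form"
    by (rule form10_eq_fscale_x1_form[OF fL L00])
  have "a = fscale c (fmul (fscale (A 0 0) (yquad u v))
      (fmul (fscale (L 1 0) x1_form) (fscale (L 1 0) x1_form)))"
    unfolding a using arg_cong2[where f = fmul, OF A arg_cong2[where f = fmul, OF L L]]
    by (rule arg_cong)
  also have "\<dots> = fscale (c * (A 0 0 * (L 1 0 * L 1 0))) (x1sq_yquad u v)"
    by (simp add: fmul_fscale_left fmul_fscale_right fscale_fscale fmul_yquad_x1_x1 mult_ac)
  finally have "fnormalize a = x1sq_yquad u v"
    by (rule fnormalize_eqI) (use c A00 L10 in \<open>simp_all add: x1sq_yquad_coeffs\<close>)
  moreover have "irred_form 0 2 (fscale (A 0 0) (yquad u v))"
    by (metis A irrA)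
  then have "(u, v) \<notin> range sum_prod"
    using irred_form_fscale A00 irred_yquad_iff by blast
  ultimately show ?thesis
    by blast
qed

lemma case3_x1sq_yquad: "(u, v) \<notin> range sum_prod \<Longrightarrow> case3 (x1sq_yquad u (v :: 'a::field))"
  unfolding case3_def
  by (rule exI[of _ 1], rule exI[of _ "yquad u v"], rule exI[of _ x1_form], intro conjI disjI2)
     (simp_all add: irred_yquad_iff fmul_yquad_x1_x1 x1_form_nonzero is_form_x1_form[simplified])

lemma card_case3_classes:
  "2 * card (scale_classes {a \<in> (sing_forms :: (nat \<Rightarrow> nat \<Rightarrow> 'a::{field,finite}) set). case3 a})
     = card (UNIV :: 'a set) * (card (UNIV :: 'a set) - 1)"
proof -
  define q where "q = card (UNIV :: 'a set)"
  define D :: "('a \<times> 'a) set" where "D = UNIV - range sum_prod"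
  have "card (scale_classes {a \<in> (sing_forms :: (nat \<Rightarrow> nat \<Rightarrow> 'a) set). case3 a})
      = card ((\<lambda>(u, v). x1sq_yquad u v) ` D)"
  proof (rule card_scale_classes_sing_forms)
    fix a :: "nat \<Rightarrow> nat \<Rightarrow> 'a"
    assume "a \<in> sing_forms" "case3 a"
    then obtain u v where "(u, v) \<in> D" "fnormalize a = x1sq_yquad u v"
      using case3_imp_normal_form unfolding D_def by blast
    then show "\<exists>x\<in>D. fnormalize a = (\<lambda>(u, v). x1sq_yquad u v) x"
      by (intro bexI[of _ "(u, v)"]) simp_all
  qed (auto simp: D_def case3_x1sq_yquad x1sq_yquad_in_sing_forms x1sq_yquad_coeffs)
  also have "\<dots> = card D"
    by (rule card_image) (auto intro!: inj_onI dest: x1sq_yquad_inject)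
  also have "\<dots> = q ^ 2 - card (range (sum_prod :: 'a \<times> 'a \<Rightarrow> _))"
    by (simp add: D_def card_Diff_subset card_UNIV_prod q_def power2_eq_square)
  finally have classes: "card (scale_classes {a \<in> (sing_forms :: (nat \<Rightarrow> nat \<Rightarrow> 'a) set). case3 a})
      = q ^ 2 - card (range (sum_prod :: 'a \<times> 'a \<Rightarrow> _))" .
  have "q \<le> q ^ 2"
    by (simp add: power2_eq_square)
  moreover have "q ^ 2 - q = q * (q - 1)"
    by (simp add: power2_eq_square diff_mult_distrib2)
  ultimately show ?thesis
    using classes card_range_sum_prod[where 'a = 'a] unfolding q_def[symmetric] by linarith
qed

lemma irred_normal11:
  assumes "(g::'a::field) \<noteq> 0"
  shows "irred_form 1 1 (normal11 g h)"
proof (rule irred_formI[OF is_form_normal11 normal11_nonzero], simp)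
  have no_split: False if fA: "is_form 1 0 A" and fB: "is_form 0 1 B"
    and eq: "normal11 g h = fmul A B" for A B
  proof -
    have coeff: "normal11 g h i j = fmul A B i j" for i j
      using eq by simp
    have "A 0 0 * B 0 0 = 0" "A 0 0 * B 0 1 = g" "A 1 0 * B 0 0 = 1"
      using coeff[of 0 0] coeff[of 0 1] coeff[of 1 0]
      by (simp_all add: fmul_def sum_atMost_small normal11_def is_formD[OF fA] is_formD[OF fB])
    then show False
      using assms by auto
  qed
  fix e1 e2 G H
  assume "e1 \<le> 1" "e2 \<le> 1" "(e1, e2) \<noteq> (0, 0)" "(e1, e2) \<noteq> (1, 1)"
    and fG: "is_form e1 e2 G" and fH: "is_form (1 - e1) (1 - e2) H" and eq: "normal11 g h = fmul G H"
  then consider "e1 = 1" "e2 = 0" | "e1 = 0" "e2 = 1"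
    by fastforce
  then show False
  proof cases
    case 1
    then show False
      using no_split[of G H] fG fH eq by simp
  next
    case 2
    then show False
      using no_split[of H G] fG fH eq by (simp add: fmul_commute)
  qed
qed

lemma case4_imp_normal_form:
  assumes "a \<in> sing_forms" "case4 (a :: nat \<Rightarrow> nat \<Rightarrow> 'a::field)"
  shows "\<exists>g h. g \<noteq> 0 \<and> fnormalize a = fmul (normal11 g h) (normal11 g h)"
proof -
  obtain c G where c: "c \<noteq> 0" and irr: "irred_form 1 1 G" and a: "a = fscale c (fmul G G)"
    using assms(2) unfolding case4_def by blast
  have fG: "is_form 1 1 G"
    using irr by (simp add: irred_form_def)
  have "a 0 0 = c * (G 0 0 * G 0 0)" "a 2 0 = c * (G 1 0 * G 1 0)"
    by (simp_all add: a fscale_def fmul_def sum_atMost_small is_formD[OF fG])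
  then have G00: "G 0 0 = 0" and G10: "G 1 0 \<noteq> 0"
    using assms(1) c by (auto simp: sing_forms_def)
  define g where "g = G 0 1 / G 1 0"
  define h where "h = G 1 1 / G 1 0"
  have G: "G = fscale (G 1 0) (normal11 g h)"
    unfolding g_def h_def by (rule form11_eq_fscale_normal11[OF fG G00 G10])
  have "a = fscale c (fmul (fscale (G 1 0) (normal11 g h)) (fscale (G 1 0) (normal11 g h)))"
    unfolding a using arg_cong2[where f = fmul, OF G G] by (rule arg_cong)
  also have "\<dots> = fscale (c * (G 1 0 * G 1 0)) (fmul (normal11 g h) (normal11 g h))"
    by (simp add: fmul_fscale_left fmul_fscale_right fscale_fscale mult_ac)
  finally have "fnormalize a = fmul (normal11 g h) (normal11 g h)"
    by (rule fnormalize_eqI) (use c G10 in \<open>simp_all add: fmul_normal11_normal11_coeffs\<close>)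
  moreover have "g \<noteq> 0"
    using irred_form_11_coeff_01[OF irr G00] G10 by (simp add: g_def)
  ultimately show ?thesis
    by blast
qed

lemma case4_normal11_sq: "(g::'a::field) \<noteq> 0 \<Longrightarrow> case4 (fmul (normal11 g h) (normal11 g h))"
  unfolding case4_def
  by (rule exI[of _ 1], rule exI[of _ "normal11 g h"]) (simp add: irred_normal11[simplified])

lemma normal11_sq_in_sing_forms: "fmul (normal11 g h) (normal11 g h) \<in> sing_forms"
proof -
  have "is_form 2 2 (fmul (normal11 g h) (normal11 g h))"
    using is_form_fmul[OF is_form_normal11 is_form_normal11] by (simp add: numeral_2_eq_2)
  then show ?thesis
    using fmul_normal11_normal11_coeffs[of g h] by (simp add: sing_forms_def)
qed

lemma normal11_sq_inject:
  fixes g h :: "'a::idom"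
  assumes "fmul (normal11 g h) (normal11 g h) = fmul (normal11 g' h') (normal11 g' h')"
  shows "g = g' \<and> h = h'"
proof -
  have coeff: "fmul (normal11 g h) (normal11 g h) i j = fmul (normal11 g' h') (normal11 g' h') i j"
    for i j
    using assms by simp
  from coeff[of 0 2] coeff[of 1 1] have "g = g'"
    unfolding fmul_normal11_normal11_coeffs by (rule eq_if_square_eq_and_double_eq)
  moreover from coeff[of 2 2] coeff[of 2 1] have "h = h'"
    unfolding fmul_normal11_normal11_coeffs by (rule eq_if_square_eq_and_double_eq)
  ultimately show ?thesis
    by simp
qed

lemma card_case4_classes:
  "card (scale_classes {a \<in> (sing_forms :: (nat \<Rightarrow> nat \<Rightarrow> 'a::{field,finite}) set). case4 a})
     = (card (UNIV :: 'a set) - 1) * card (UNIV :: 'a set)"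
proof -
  define D :: "('a \<times> 'a) set" where "D = (UNIV - {0}) \<times> UNIV"
  define f :: "'a \<times> 'a \<Rightarrow> nat \<Rightarrow> nat \<Rightarrow> 'a" where
    "f = (\<lambda>(g, h). fmul (normal11 g h) (normal11 g h))"
  have "card (scale_classes {a \<in> (sing_forms :: (nat \<Rightarrow> nat \<Rightarrow> 'a) set). case4 a}) = card (f ` D)"
  proof (rule card_scale_classes_sing_forms)
    fix a :: "nat \<Rightarrow> nat \<Rightarrow> 'a"
    assume "a \<in> sing_forms" "case4 a"
    then obtain g h where "g \<noteq> 0" "fnormalize a = fmul (normal11 g h) (normal11 g h)"
      using case4_imp_normal_form by blast
    then show "\<exists>x\<in>D. fnormalize a = f x"
      by (intro bexI[of _ "(g, h)"]) (simp_all add: D_def f_def)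
  next
    fix x assume "x \<in> D"
    then show "f x \<in> sing_forms \<and> case4 (f x) \<and> f x 2 0 = 1"
      by (cases x) (simp add: D_def f_def case4_normal11_sq normal11_sq_in_sing_forms
          fmul_normal11_normal11_coeffs)
  qed
  also have "\<dots> = card D"
    by (rule card_image) (auto simp: inj_on_def f_def dest: normal11_sq_inject)
  finally show ?thesis
    by (simp add: D_def card_cartesian_product card_Diff_subset)
qed

lemma case5_imp_normal_form:
  assumes "a \<in> sing_forms" "case5 (a :: nat \<Rightarrow> nat \<Rightarrow> 'a::field)"
  shows "\<exists>m. fnormalize a = x1sq_yquad (2 * m) (m * m)"
proof -
  obtain c L M where c: "c \<noteq> 0" and fL: "is_form 1 0 L" and fM: "is_form 0 1 M"
    and a: "a = fscale c (fmul (fmul L L) (fmul M M))"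
    using assms(2) unfolding case5_def by blast
  have "a 0 0 = c * (L 0 0 * L 0 0 * (M 0 0 * M 0 0))" "a 2 0 = c * (L 1 0 * L 1 0 * (M 0 0 * M 0 0))"
    by (simp_all add: a fscale_def fmul_def sum_atMost_small is_formD[OF fL] is_formD[OF fM])
  then have L10: "L 1 0 \<noteq> 0" and M00: "M 0 0 \<noteq> 0" and L00: "L 0 0 = 0"
    using assms(1) c by (auto simp: sing_forms_def)
  define m where "m = M 0 1 / M 0 0"
  have L: "L = fscale (L 1 0) x1_form"
    by (rule form10_eq_fscale_x1_form[OF fL L00])
  have M: "M = fscale (M 0 0) (ylin m)"
    unfolding m_def by (rule form01_eq_fscale_ylin[OF fM M00])
  have "a = fscale c (fmul (fmul (fscale (L 1 0) x1_form) (fscale (L 1 0) x1_form))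
      (fmul (fscale (M 0 0) (ylin m)) (fscale (M 0 0) (ylin m))))"
    unfolding a using arg_cong2[where f = fmul, OF arg_cong2[where f = fmul, OF L L]
        arg_cong2[where f = fmul, OF M M]] by (rule arg_cong)
  also have "\<dots> = fscale (c * (L 1 0 * L 1 0) * (M 0 0 * M 0 0))
      (fmul (yquad (2 * m) (m * m)) (fmul x1_form x1_form))"
    by (simp add: fmul_fscale_left fmul_fscale_right fscale_fscale fmul_ylin_ylin_same
        fmul_commute[of "fmul x1_form x1_form"] mult_ac)
  finally have "fnormalize a = x1sq_yquad (2 * m) (m * m)"
    unfolding fmul_yquad_x1_x1
    by (rule fnormalize_eqI) (use c L10 M00 in \<open>simp_all add: x1sq_yquad_coeffs\<close>)
  then show ?thesis
    by blast
qed

lemma case5_x1sq_yquad: "case5 (x1sq_yquad (2 * m) (m * m) :: nat \<Rightarrow> nat \<Rightarrow> 'a::field)"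
proof -
  have eq: "x1sq_yquad (2 * m) (m * m) = fmul (fmul x1_form x1_form) (fmul (ylin m) (ylin m))"
    by (simp add: fmul_ylin_ylin_same fmul_yquad_x1_x1 fmul_commute[of "fmul x1_form x1_form"])
  show ?thesis
    unfolding case5_def
    by (rule exI[of _ 1], rule exI[of _ x1_form], rule exI[of _ "ylin m"])
       (simp add: eq is_form_x1_form[simplified] is_form_ylin[simplified] x1_form_nonzero ylin_nonzero)
qed

lemma card_case5_classes:
  "card (scale_classes {a \<in> (sing_forms :: (nat \<Rightarrow> nat \<Rightarrow> 'a::{field,finite}) set). case5 a})
     = card (UNIV :: 'a set)"
proof -
  define f :: "'a \<Rightarrow> nat \<Rightarrow> nat \<Rightarrow> 'a" where "f = (\<lambda>m. x1sq_yquad (2 * m) (m * m))"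
  have "card (scale_classes {a \<in> (sing_forms :: (nat \<Rightarrow> nat \<Rightarrow> 'a) set). case5 a}) = card (range f)"
    by (rule card_scale_classes_sing_forms)
       (use case5_imp_normal_form in \<open>auto simp: f_def case5_x1sq_yquad x1sq_yquad_in_sing_forms
         x1sq_yquad_coeffs\<close>)
  also have "\<dots> = card (UNIV :: 'a set)"
  proof (rule card_image, rule inj_onI)
    fix m n :: 'a
    assume "f m = f n"
    then have "m * m = n * n" "2 * m = 2 * n"
      unfolding f_def by (auto dest: x1sq_yquad_inject)
    then show "m = n"
      by (rule eq_if_square_eq_and_double_eq)
  qed
  finally show ?thesis .
qed

lemma case4_coeff_02: "a \<in> sing_forms \<Longrightarrow> case4 (a :: nat \<Rightarrow> nat \<Rightarrow> 'a::field) \<Longrightarrow> a 0 2 \<noteq> 0"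
  using case4_imp_normal_form fnormalize_coeff_eq_0_iff[of a] sing_forms_coeff_20
  by (metis fmul_normal11_normal11_coeffs(5) mult_eq_0_iff)

lemma case3_or_case5_coeff_02:
  "a \<in> sing_forms \<Longrightarrow> case3 a \<or> case5 (a :: nat \<Rightarrow> nat \<Rightarrow> 'a::field) \<Longrightarrow> a 0 2 = 0"
  using case3_imp_normal_form case5_imp_normal_form fnormalize_coeff_eq_0_iff[of a] sing_forms_coeff_20
  by (metis x1sq_yquad_coeffs(5))

section \<open>Case 1\<close>

lemma power_card_eq_self:
  fixes x :: "'a::{field,finite}"
  shows "x ^ card (UNIV :: 'a set) = x"
proof (cases "x = 0")
  case False
  have "x * (\<Prod>y\<in>UNIV - {0}. x * y) = x * x ^ (card (UNIV :: 'a set) - 1) * \<Prod>(UNIV - {0})"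
    by (simp add: prod.distrib mult_ac)
  also have "x * x ^ (card (UNIV :: 'a set) - 1) = x ^ card (UNIV :: 'a set)"
    using finite_UNIV_card_ge_0[where 'a = 'a] by (simp flip: power_Suc)
  also have "(\<Prod>y\<in>UNIV - {0}. x * y) = (\<Prod>y\<in>UNIV - {0}. y)"
    \<comment> \<open>multiplication by \<open>x\<close> permutes the nonzero elements\<close>
    by (rule prod.reindex_bij_witness[of _ "\<lambda>y. y / x" "\<lambda>y. x * y"]) (use False in auto)
  finally show ?thesis
    by simp
qed (use finite_UNIV_card_ge_0[where 'a = 'a] in auto)

lemma sing_form_not_fmul_10:
  assumes "b \<in> sing_forms" "b 0 2 \<noteq> 0" "is_form 1 0 A" "is_form 1 2 B" "b = fmul A B"
  shows False
proof -
  have "b 0 0 = A 0 0 * B 0 0" "b 1 0 = A 0 0 * B 1 0 + A 1 0 * B 0 0"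
    "b 2 0 = A 1 0 * B 1 0" "b 0 2 = A 0 0 * B 0 2"
    by (simp_all add: assms(5) fmul_def sum_atMost_small is_formD[OF assms(3)] is_formD[OF assms(4)])
  then show False
    using assms(1,2) by (auto simp: sing_forms_def)
qed

lemma sing_form_not_fmul_01:
  assumes "b \<in> sing_forms" "b 0 2 \<noteq> 0" "is_form 0 1 A" "is_form 2 1 B" "b = fmul A B"
  shows False
proof -
  have "b 0 0 = A 0 0 * B 0 0" "b 0 1 = A 0 0 * B 0 1 + A 0 1 * B 0 0"
    "b 2 0 = A 0 0 * B 2 0" "b 0 2 = A 0 1 * B 0 1"
    by (simp_all add: assms(5) fmul_def sum_atMost_small is_formD[OF assms(3)] is_formD[OF assms(4)])
  then show False
    using assms(1,2) by (auto simp: sing_forms_def)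
qed

lemma sing_form_not_fmul_20:
  assumes "b \<in> sing_forms" "b 0 2 \<noteq> 0" "is_form 2 0 A" "is_form 0 2 B" "b = fmul A B"
  shows False
proof -
  have "b 0 0 = A 0 0 * B 0 0" "b 2 0 = A 2 0 * B 0 0" "b 0 2 = A 0 0 * B 0 2"
    by (simp_all add: assms(5) fmul_def sum_atMost_small is_formD[OF assms(3)] is_formD[OF assms(4)])
  then show False
    using assms(1,2) by (auto simp: sing_forms_def)
qed

lemma sing_form_factor_bidegree:
  assumes b: "b \<in> sing_forms" "b 0 2 \<noteq> 0"
    and "e1 \<le> 2" "e2 \<le> 2" "(e1, e2) \<noteq> (0, 0)" "(e1, e2) \<noteq> (2, 2)"
    and fA: "is_form e1 e2 A" and fB: "is_form (2 - e1) (2 - e2) B" and eq: "b = fmul A B"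
  shows "e1 = 1 \<and> e2 = 1"
proof -
  have eq': "b = fmul B A"
    using eq fmul_commute by metis
  have "e1 \<in> {0, 1, 2}" "e2 \<in> {0, 1, 2}"
    using assms(3,4) by auto
  then consider "e1 = 0" "e2 = 1" | "e1 = 0" "e2 = 2" | "e1 = 1" "e2 = 0" | "e1 = 1" "e2 = 1"
    | "e1 = 1" "e2 = 2" | "e1 = 2" "e2 = 0" | "e1 = 2" "e2 = 1"
    using assms(5,6) by auto
  then show ?thesis
  proof cases
    case 1
    then show ?thesis
      using sing_form_not_fmul_01[OF b _ _ eq] fA fB by simp
  next
    case 2
    then show ?thesis
      using sing_form_not_fmul_20[OF b _ _ eq'] fA fB by simp
  next
    case 3
    then show ?thesis
      using sing_form_not_fmul_10[OF b _ _ eq] fA fB by simp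
  next
    case 5
    then show ?thesis
      using sing_form_not_fmul_10[OF b _ _ eq'] fA fB by simp
  next
    case 6
    then show ?thesis
      using sing_form_not_fmul_20[OF b _ _ eq] fA fB by simp
  next
    case 7
    then show ?thesis
      using sing_form_not_fmul_01[OF b _ _ eq'] fA fB by simp
  qed simp
qed

lemma eval_form_fscale: "eval_form d1 d2 (fscale u F) P Q = u * eval_form d1 d2 F P Q"
  by (simp add: eval_form_def fscale_def sum_distrib_left mult_ac)

definition P1_point :: "'a::field \<Rightarrow> 'a \<Rightarrow> 'a \<times> 'a" where
  "P1_point x0 x1 = (if x0 = 0 then (0, 1) else (1, x1 / x0))"

lemma P1_point_scale: "c \<noteq> 0 \<Longrightarrow> P1_point (c * x0) (c * x1) = P1_point x0 x1"
  by (simp add: P1_point_def)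

lemma P1_linear_iff:
  assumes "(a, b) \<noteq> (0, (0::'a::field))"
  shows "P \<in> P1 \<and> a * fst P + b * snd P = 0 \<longleftrightarrow> P = P1_point b (- a)"
  using assms by (auto simp: P1_def P1_point_def field_simps) (metis add.commute add_eq_0_iff2)+

subsection \<open>The quadratic extension\<close>

locale quadratic_extension =
  fixes p :: nat and emb :: "'k::{field,finite} \<Rightarrow> 'K::{field,finite}"
  assumes prime_p: "prime p"
    and card_k: "card (UNIV :: 'k set) = p"
    and card_K: "card (UNIV :: 'K set) = p ^ 2"
    and emb_hom_add: "\<forall>x y. emb (x + y) = emb x + emb y"
    and emb_hom_mult: "\<forall>x y. emb (x * y) = emb x * emb y"
    and emb_hom_one: "emb 1 = 1"
begin

lemma emb_add [simp]: "emb (x + y) = emb x + emb y"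
  using emb_hom_add by blast

lemma emb_mult [simp]: "emb (x * y) = emb x * emb y"
  using emb_hom_mult by blast

lemma emb_one [simp]: "emb 1 = 1"
  by (rule emb_hom_one)

lemma emb_zero [simp]: "emb 0 = 0"
proof -
  have "emb 0 + emb 0 = emb 0 + 0"
    using emb_add[of 0 0] by simp
  then show ?thesis
    by (simp only: add_left_cancel)
qed

lemma emb_minus [simp]: "emb (- x) = - emb x"
  using emb_add[of "- x" x] by (simp add: eq_neg_iff_add_eq_0)

lemma emb_diff [simp]: "emb (x - y) = emb x - emb y"
  using emb_add[of x "- y"] by simp

lemma emb_power [simp]: "emb (x ^ n) = emb x ^ n"
  by (induction n) auto

lemma emb_of_nat [simp]: "emb (of_nat n) = of_nat n"
  by (induction n) auto

lemma emb_sum: "emb (sum f A) = (\<Sum>a\<in>A. emb (f a))"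
  by (induction A rule: infinite_finite_induct) auto

lemma emb_eq_0_iff [simp]: "emb x = 0 \<longleftrightarrow> x = 0"
proof
  assume x: "emb x = 0"
  show "x = 0"
  proof (rule ccontr)
    assume "x \<noteq> 0"
    then have "emb (x * inverse x) = 1"
      by simp
    with x show False
      by simp
  qed
qed simp

lemma inj_emb: "inj emb"
  by (rule injI) (metis emb_diff emb_eq_0_iff right_minus_eq)

lemma emb_eq_iff [simp]: "emb x = emb y \<longleftrightarrow> x = y"
  by (rule inj_eq[OF inj_emb])

lemma CHAR_k: "CHAR('k) = p"
proof -
  have "CHAR('k) dvd p"
    using CHAR_dvd_CARD[where 'a = 'k] card_k by simp
  then show ?thesis
    using prime_p by (auto simp: prime_nat_iff)
qed

lemma CHAR_K: "CHAR('K) = p"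
proof -
  have "of_nat p = (0::'k)"
    using CHAR_k of_nat_CHAR by metis
  then have "of_nat p = (0::'K)"
    using emb_of_nat[of p] by simp
  then have "CHAR('K) dvd p"
    by (simp add: of_nat_eq_0_iff_char_dvd)
  then show ?thesis
    using prime_p by (auto simp: prime_nat_iff)
qed

lemma p_pos: "0 < p"
  using prime_p prime_gt_0_nat by blast

lemma prime_CHAR_K: "prime CHAR('K)"
  using CHAR_K prime_p by simp

lemma frob_add: "((x::'K) + y) ^ p = x ^ p + y ^ p"
  by (rule freshmans_dream[OF prime_CHAR_K CHAR_K[symmetric]])

lemma frob_minus: "(- (x::'K)) ^ p = - (x ^ p)"
  by (rule minus_power_prime_CHAR[OF CHAR_K[symmetric] prime_p])

lemma frob_diff: "((x::'K) - y) ^ p = x ^ p - y ^ p"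
  using frob_add[of x "- y"] frob_minus[of y] by simp

lemma frob_sum: "(sum (f :: _ \<Rightarrow> 'K) A) ^ p = (\<Sum>a\<in>A. f a ^ p)"
  by (rule freshmans_dream_sum[OF prime_CHAR_K CHAR_K[symmetric]])

lemma frob_frob [simp]: "((x::'K) ^ p) ^ p = x"
  using power_card_eq_self[of x] card_K by (simp add: power_mult[symmetric] power2_eq_square)

lemma frob_eq_0_iff [simp]: "(x::'K) ^ p = 0 \<longleftrightarrow> x = 0"
  using p_pos by simp

lemma power_p_k_eq_self [simp]: "(y::'k) ^ p = y"
  using power_card_eq_self[of y] card_k by simp

text \<open>The \<open>p\<close> elements of \<open>range emb\<close> are roots of \<open>X\<^sup>p - X\<close>, which has at most \<open>p\<close> roots.\<close>

lemma range_emb_iff: "x \<in> range emb \<longleftrightarrow> x ^ p = x"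
proof
  assume "x \<in> range emb"
  then show "x ^ p = x"
    by (metis emb_power power_p_k_eq_self rangeE)
next
  assume x: "x ^ p = x"
  define q :: "'K poly" where "q = Polynomial.monom 1 p + [:0, -1:]"
  have "degree q = p"
    unfolding q_def using prime_gt_1_nat[OF prime_p]
    by (simp add: degree_add_eq_left degree_monom_eq)
  then have q0: "q \<noteq> 0"
    using prime_gt_1_nat[OF prime_p] by auto
  have roots: "{z. poly q z = 0} = {z. z ^ p = z}"
    by (simp add: q_def poly_monom add_eq_0_iff2)
  have "range emb \<subseteq> {z. poly q z = 0}"
    unfolding roots by (auto simp flip: emb_power)
  moreover have "card {z. poly q z = 0} \<le> p"
    using card_poly_roots_bound[OF q0] \<open>degree q = p\<close> by simp
  moreover have "card (range emb) = p"
    using card_image[OF inj_emb] card_k by simp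
  ultimately have "range emb = {z. poly q z = 0}"
    by (intro card_seteq[OF poly_roots_finite[OF q0]]) simp_all
  then show "x \<in> range emb"
    using x unfolding roots by simp
qed

lemma emb_the_inv_emb: "x ^ p = x \<Longrightarrow> emb (the_inv emb x) = x"
  by (simp add: f_the_inv_into_f[OF inj_emb] range_emb_iff)

definition emb_form :: "(nat \<Rightarrow> nat \<Rightarrow> 'k) \<Rightarrow> nat \<Rightarrow> nat \<Rightarrow> 'K" where
  "emb_form F = (\<lambda>i j. emb (F i j))"

lemma emb_form_fmul: "emb_form (fmul F G) = fmul (emb_form F) (emb_form G)"
  by (simp add: emb_form_def fmul_def emb_sum)

lemma emb_form_fscale: "emb_form (fscale c F) = fscale (emb c) (emb_form F)"
  by (simp add: emb_form_def fscale_def)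

lemma emb_form_inject: "emb_form F = emb_form G \<Longrightarrow> F = G"
  by (simp add: emb_form_def fun_eq_iff)

lemma emb_form_normal11: "emb_form (normal11 a b) = normal11 (emb a) (emb b)"
  by (simp add: emb_form_def normal11_def fun_eq_iff)

lemma gconj_fmul: "gconj p (fmul F G) = fmul (gconj p F) (gconj p (G :: nat \<Rightarrow> nat \<Rightarrow> 'K))"
  by (simp add: gconj_def fmul_def frob_sum power_mult_distrib)

lemma gconj_fscale: "gconj p (fscale c (F :: nat \<Rightarrow> nat \<Rightarrow> 'K)) = fscale (c ^ p) (gconj p F)"
  by (simp add: gconj_def fscale_def power_mult_distrib)

lemma gconj_normal11: "gconj p (normal11 g h) = normal11 (g ^ p) (h ^ (p :: nat) :: 'K)"
  using p_pos by (simp add: gconj_def normal11_def fun_eq_iff)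

definition conj_prod :: "'K \<Rightarrow> 'K \<Rightarrow> nat \<Rightarrow> nat \<Rightarrow> 'K" where
  "conj_prod g h = fmul (normal11 g h) (gconj p (normal11 g h))"

lemma conj_prod_coeffs:
  "conj_prod g h 0 0 = 0" "conj_prod g h 0 1 = 0" "conj_prod g h 1 0 = 0" "conj_prod g h 2 0 = 1"
  "conj_prod g h 0 2 = g * g ^ p" "conj_prod g h 1 1 = g + g ^ p"
  "conj_prod g h 1 2 = g * h ^ p + h * g ^ p"
  "conj_prod g h 2 1 = h + h ^ p" "conj_prod g h 2 2 = h * h ^ p"
  unfolding conj_prod_def gconj_normal11
  by (simp_all add: fmul_def sum_atMost_small normal11_def add_ac)

lemma is_form_conj_prod: "is_form 2 2 (conj_prod g h)"
  using is_form_fmul[OF is_form_normal11 is_form_normal11]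
  by (simp add: conj_prod_def gconj_normal11 numeral_2_eq_2)

lemma conj_prod_frob: "conj_prod (g ^ p) (h ^ p) = conj_prod g h"
  by (simp add: conj_prod_def gconj_normal11 fmul_commute)

lemma frob_conj_prod_coeff: "conj_prod g h i j ^ p = conj_prod g h i j"
proof -
  have "gconj p (conj_prod g h) = conj_prod g h"
    unfolding conj_prod_def gconj_fmul gconj_normal11 by (simp add: fmul_commute)
  then have "gconj p (conj_prod g h) i j = conj_prod g h i j"
    by simp
  then show ?thesis
    by (simp add: gconj_def)
qed

text \<open>The coefficients of \<open>conj_prod g h\<close> are fixed by Frobenius, hence lie in \<open>range emb\<close>.\<close>

definition case1_form :: "'K \<Rightarrow> 'K \<Rightarrow> nat \<Rightarrow> nat \<Rightarrow> 'k" where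
  "case1_form g h = (\<lambda>i j. the_inv emb (conj_prod g h i j))"

lemma emb_case1_form [simp]: "emb (case1_form g h i j) = conj_prod g h i j"
  by (simp add: case1_form_def emb_the_inv_emb frob_conj_prod_coeff)

lemma emb_form_case1_form: "emb_form (case1_form g h) = conj_prod g h"
  by (simp add: emb_form_def fun_eq_iff)

lemma case1_form_frob: "case1_form (g ^ p) (h ^ p) = case1_form g h"
  by (simp add: case1_form_def conj_prod_frob)

lemma is_form_case1_form: "is_form 2 2 (case1_form g h)"
  using is_form_conj_prod[of g h] by (simp add: is_form_def flip: emb_eq_0_iff)

lemma case1_form_coeffs:
  "case1_form g h 0 0 = 0" "case1_form g h 0 1 = 0" "case1_form g h 1 0 = 0" "case1_form g h 2 0 = 1"
  using conj_prod_coeffs(1-4)[of g h] by (simp_all flip: emb_eq_iff emb_eq_0_iff)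

lemma case1_form_coeff_02_eq_0_iff: "case1_form g h 0 2 = 0 \<longleftrightarrow> g = 0"
  using conj_prod_coeffs(5)[of g h] by (auto simp flip: emb_eq_0_iff)

lemma case1_form_in_sing_forms: "case1_form g h \<in> sing_forms"
  using is_form_case1_form case1_form_coeffs by (simp add: sing_forms_def)

lemma rational_of_sum_prod:
  assumes "(x::'K) ^ p = x" "x + y = g + g ^ p" "x * y = g * g ^ p"
  shows "g ^ p = g"
proof -
  have "(g, g ^ p) = (x, y) \<or> (g, g ^ p) = (y, x)"
    using assms(2,3) by (intro sum_prod_eqD) (simp add: sum_prod_def)
  then show ?thesis
    using assms(1) frob_frob[of g] by auto
qed

lemma case1_form_fmul_11_rational_of_coeff_00:
  assumes fA: "is_form 1 1 A" and fB: "is_form 1 1 B" and eq: "case1_form g h = fmul A B"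
    and A00: "A 0 0 = 0"
  shows "g ^ p = g \<and> h ^ p = h"
proof -
  have c: "case1_form g h 1 0 = A 1 0 * B 0 0" "case1_form g h 2 0 = A 1 0 * B 1 0"
    "case1_form g h 0 2 = A 0 1 * B 0 1"
    "case1_form g h 1 1 = A 0 1 * B 1 0 + A 1 0 * B 0 1 + A 1 1 * B 0 0"
    "case1_form g h 2 1 = A 1 0 * B 1 1 + A 1 1 * B 1 0" "case1_form g h 2 2 = A 1 1 * B 1 1"
    unfolding eq using A00 by (simp_all add: fmul_def sum_atMost_small is_formD[OF fA] is_formD[OF fB])
  have unit: "A 1 0 * B 1 0 = 1"
    using c(2) case1_form_coeffs(4) by simp
  then have B00: "B 0 0 = 0"
    using c(1) case1_form_coeffs(3) by auto
  have rat: "emb x ^ p = emb x" for x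
    by (simp flip: emb_power)
  have sum_g: "emb (A 0 1 * B 1 0) + emb (A 1 0 * B 0 1) = g + g ^ p"
    using arg_cong[OF c(4), of emb] B00 by (simp add: conj_prod_coeffs[simplified])
  have "emb (A 0 1 * B 1 0) * emb (A 1 0 * B 0 1) = emb ((A 1 0 * B 1 0) * (A 0 1 * B 0 1))"
    by (simp add: mult_ac)
  also have "\<dots> = g * g ^ p"
    using arg_cong[OF c(3), of emb] unit by (simp add: conj_prod_coeffs)
  finally have g: "g ^ p = g"
    using rational_of_sum_prod[OF rat sum_g] by blast
  have sum_h: "emb (A 1 1 * B 1 0) + emb (A 1 0 * B 1 1) = h + h ^ p"
    using arg_cong[OF c(5), of emb] by (simp add: conj_prod_coeffs[simplified] add_ac)
  have "emb (A 1 1 * B 1 0) * emb (A 1 0 * B 1 1) = emb ((A 1 0 * B 1 0) * (A 1 1 * B 1 1))"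
    by (simp add: mult_ac)
  also have "\<dots> = h * h ^ p"
    using arg_cong[OF c(6), of emb] unit by (simp add: conj_prod_coeffs)
  finally have "h ^ p = h"
    using rational_of_sum_prod[OF rat sum_h] by blast
  with g show ?thesis
    by simp
qed

lemma case1_form_fmul_11_rational:
  assumes "is_form 1 1 A" "is_form 1 1 B" "case1_form g h = fmul A B"
  shows "g ^ p = g \<and> h ^ p = h"
proof -
  have "A 0 0 * B 0 0 = 0"
    using case1_form_coeffs(1)[of g h] by (simp add: assms(3) fmul_def)
  then consider "A 0 0 = 0" | "B 0 0 = 0"
    by auto
  then show ?thesis
  proof cases
    case 1
    then show ?thesis
      by (rule case1_form_fmul_11_rational_of_coeff_00[OF assms])
  next
    case 2
    moreover have "case1_form g h = fmul B A"
      using assms(3) by (simp add: fmul_commute)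
    ultimately show ?thesis
      by (rule case1_form_fmul_11_rational_of_coeff_00[OF assms(2,1), rotated])
  qed
qed

lemma case1_form_0:
  "case1_form 0 h = x1sq_yquad (the_inv emb (h + h ^ p)) (the_inv emb (h * h ^ p))"
proof -
  have "the_inv emb 0 = 0" "the_inv emb 1 = 1"
    using the_inv_f_f[OF inj_emb, of 0] the_inv_f_f[OF inj_emb, of 1] by simp_all
  then show ?thesis
    by (intro form22_eqI[OF is_form_case1_form is_form_x1sq_yquad]) (use p_pos in
        \<open>simp_all add: case1_form_def conj_prod_coeffs[simplified] x1sq_yquad_def yquad_def zero_power\<close>)
qed

lemma case1_form_emb: "case1_form (emb a) (emb b) = fmul (normal11 a b) (normal11 a b)"
  by (rule emb_form_inject)
     (simp add: emb_form_case1_form emb_form_fmul emb_form_normal11 conj_prod_def gconj_normal11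
       flip: emb_power)

lemma not_irred_case1_form_0: "\<not> irred_form 2 2 (case1_form 0 h)"
proof
  assume irr: "irred_form 2 2 (case1_form 0 h)"
  define Y where "Y = yquad (the_inv emb (h + h ^ p)) (the_inv emb (h * h ^ p))"
  have eq: "case1_form 0 h = fmul Y (fmul x1_form x1_form)"
    by (simp add: Y_def case1_form_0 fmul_yquad_x1_x1)
  have "is_form 2 0 (fmul x1_form (x1_form :: nat \<Rightarrow> nat \<Rightarrow> 'k))"
    using is_form_fmul[OF is_form_x1_form is_form_x1_form] by (simp add: numeral_2_eq_2)
  then show False
    by (intro irred_formD[OF irr, of 0 2 Y "fmul x1_form x1_form"]) (simp_all add: eq Y_def is_form_yquad)
qed

lemma not_irred_case1_form_emb: "\<not> irred_form 2 2 (case1_form (emb a) (emb b))"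
proof
  assume "irred_form 2 2 (case1_form (emb a) (emb b))"
  then show False
    by (intro irred_formD[of 2 2 _ 1 1 "normal11 a b" "normal11 a b"])
       (simp_all add: case1_form_emb is_form_normal11[simplified])
qed

lemma irred_case1_form:
  assumes "g \<noteq> 0" "\<not> (g ^ p = g \<and> h ^ p = h)"
  shows "irred_form 2 2 (case1_form g h)"
proof -
  have "case1_form g h \<noteq> (\<lambda>i j. 0)"
    using case1_form_coeffs(4) by (metis zero_neq_one)
  moreover have False
    if "e1 \<le> 2" "e2 \<le> 2" "(e1, e2) \<noteq> (0, 0)" "(e1, e2) \<noteq> (2, 2)"
      and fG: "is_form e1 e2 G" and fH: "is_form (2 - e1) (2 - e2) H" and eq: "case1_form g h = fmul G H"
    for e1 e2 G H
  proof -
    have "case1_form g h 0 2 \<noteq> 0"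
      using assms(1) case1_form_coeff_02_eq_0_iff by simp
    then have "e1 = 1 \<and> e2 = 1"
      using sing_form_factor_bidegree[OF case1_form_in_sing_forms _ that(1-4) fG fH eq] by blast
    then have "is_form 1 1 G" "is_form 1 1 H"
      using fG fH by simp_all
    then show False
      using case1_form_fmul_11_rational eq assms(2) by blast
  qed
  ultimately show ?thesis
    by (intro irred_formI[OF is_form_case1_form]) auto
qed

lemma irred_case1_form_iff:
  "irred_form 2 2 (case1_form g h) \<longleftrightarrow> g \<noteq> 0 \<and> \<not> (g ^ p = g \<and> h ^ p = h)"
proof
  assume irr: "irred_form 2 2 (case1_form g h)"
  have "\<not> (g ^ p = g \<and> h ^ p = h)"
  proof
    assume "g ^ p = g \<and> h ^ p = h"
    then obtain a b where "g = emb a" "h = emb b"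
      by (metis range_emb_iff rangeE)
    then show False
      using irr not_irred_case1_form_emb by simp
  qed
  then show "g \<noteq> 0 \<and> \<not> (g ^ p = g \<and> h ^ p = h)"
    using irr not_irred_case1_form_0 by auto
qed (use irred_case1_form in blast)

lemma P1_point_frob:
  "(fst (P1_point x0 x1) ^ p, snd (P1_point x0 x1) ^ p) = P1_point (x0 ^ p) (x1 ^ p)"
  using p_pos by (simp add: P1_point_def power_divide)

lemma rational_pt_iff:
  "rational_pt emb z \<longleftrightarrow>
     (fst (fst z) ^ p, snd (fst z) ^ p) = fst z \<and> (fst (snd z) ^ p, snd (snd z) ^ p) = snd z"
  by (auto simp: rational_pt_def range_emb_iff prod_eq_iff)

lemma conj_inter_fscale: "(u::'K) \<noteq> 0 \<Longrightarrow> conj_inter p (fscale u G) = conj_inter p G"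
  unfolding conj_inter_def gconj_fscale eval_form_fscale by simp

lemma mem_conj_inter_normal11:
  "((x0, x1), (y0, y1)) \<in> conj_inter p (normal11 g (h :: 'K)) \<longleftrightarrow>
     (x0, x1) \<in> P1 \<and> (y0, y1) \<in> P1 \<and> g * x0 * y1 + x1 * y0 + h * x1 * y1 = 0 \<and>
     g ^ p * x0 * y1 + x1 * y0 + h ^ p * x1 * y1 = 0"
  unfolding conj_inter_def gconj_normal11
  by (simp add: eval_form_def sum_atMost_small normal11_def ac_simps)

definition sing_pt :: "('K \<times> 'K) \<times> ('K \<times> 'K)" where
  "sing_pt = ((1, 0), (1, 0))"

lemma sing_pt_in_conj_inter: "sing_pt \<in> conj_inter p (normal11 g (h :: 'K))"
  by (simp add: sing_pt_def mem_conj_inter_normal11 P1_def)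

lemma rational_sing_pt: "rational_pt emb sing_pt"
  using p_pos by (simp add: sing_pt_def rational_pt_iff)

lemma conj_inter_y1_eq_0:
  "((x0, x1), (y0, y1)) \<in> conj_inter p (normal11 g (h :: 'K)) \<Longrightarrow> y1 = 0 \<Longrightarrow>
    ((x0, x1), (y0, y1)) = sing_pt"
  by (auto simp: mem_conj_inter_normal11 P1_def sing_pt_def)

lemma conj_inter_normal11_diff:
  assumes "((x0, x1), (y0, y1)) \<in> conj_inter p (normal11 g (h :: 'K))"
  shows "y1 * ((g - g ^ p) * x0 + (h - h ^ p) * x1) = 0"
proof -
  have E1: "g * x0 * y1 + x1 * y0 + h * x1 * y1 = 0"
    and E2: "g ^ p * x0 * y1 + x1 * y0 + h ^ p * x1 * y1 = 0"
    using assms by (simp_all add: mem_conj_inter_normal11)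
  have "y1 * ((g - g ^ p) * x0 + (h - h ^ p) * x1)
      = (g * x0 * y1 + x1 * y0 + h * x1 * y1) - (g ^ p * x0 * y1 + x1 * y0 + h ^ p * x1 * y1)"
    by (simp add: algebra_simps)
  also have "\<dots> = 0"
    by (simp only: E1 E2 diff_self)
  finally show ?thesis .
qed

lemma conj_inter_rational_g:
  assumes "g \<noteq> 0" "g ^ p = g" "h ^ p \<noteq> h"
  shows "conj_inter p (normal11 g h) = {sing_pt}"
proof (intro equalityI subsetI)
  fix z assume z: "z \<in> conj_inter p (normal11 g h)"
  obtain x0 x1 y0 y1 where zz: "z = ((x0, x1), (y0, y1))"
    by (metis prod.collapse)
  note m = z[unfolded zz mem_conj_inter_normal11]
  have "y1 * ((h - h ^ p) * x1) = 0"
    using conj_inter_normal11_diff[OF z[unfolded zz]] assms(2) by simp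
  then have "x1 = 0 \<or> y1 = 0"
    using assms(3) by auto
  then have "y1 = 0"
  proof
    assume "x1 = 0"
    then have "x0 = 1"
      using m by (auto simp: P1_def)
    then show "y1 = 0"
      using m \<open>x1 = 0\<close> assms(1) by simp
  qed
  then show "z \<in> {sing_pt}"
    using z conj_inter_y1_eq_0 unfolding zz by blast
qed (simp add: sing_pt_in_conj_inter)

text \<open>For \<open>g \<notin> \<bbbF>\<^sub>p\<close> the second intersection point: its first coordinate is the zero of
  \<open>(g - g\<^sup>p) X\<^sub>0 + (h - h\<^sup>p) X\<^sub>1\<close>, its second one is then determined by \<open>G = 0\<close>.\<close>

definition second_xpt :: "'K \<Rightarrow> 'K \<Rightarrow> 'K \<times> 'K" where
  "second_xpt g h = P1_point (h - h ^ p) (g ^ p - g)"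

definition second_ypt :: "'K \<Rightarrow> 'K \<Rightarrow> 'K \<times> 'K" where
  "second_ypt g h = P1_point (g * fst (second_xpt g h) + h * snd (second_xpt g h)) (- snd (second_xpt g h))"

lemma second_xpt_iff:
  assumes "g ^ p \<noteq> g"
  shows "P \<in> P1 \<and> (g - g ^ p) * fst P + (h - h ^ p) * snd P = 0 \<longleftrightarrow> P = second_xpt g h"
  using P1_linear_iff[of "g - g ^ p" "h - h ^ p" P] assms by (simp add: second_xpt_def)

lemma snd_second_xpt: "g ^ p \<noteq> g \<Longrightarrow> snd (second_xpt g h) \<noteq> 0"
  by (simp add: second_xpt_def P1_point_def)

lemma second_ypt_iff:
  assumes "g ^ p \<noteq> g"
  shows "Q \<in> P1 \<and> snd (second_xpt g h) * fst Q + (g * fst (second_xpt g h) + h * snd (second_xpt g h)) * snd Q = 0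
    \<longleftrightarrow> Q = second_ypt g h"
  unfolding second_ypt_def by (rule P1_linear_iff) (simp add: snd_second_xpt[OF assms])

lemma second_pt_in_conj_inter:
  assumes "g ^ p \<noteq> g"
  shows "(second_xpt g h, second_ypt g h) \<in> conj_inter p (normal11 g h)"
proof -
  obtain x0 x1 y0 y1 where xy: "second_xpt g h = (x0, x1)" "second_ypt g h = (y0, y1)"
    by (metis prod.collapse)
  have x: "(x0, x1) \<in> P1" "(g - g ^ p) * x0 + (h - h ^ p) * x1 = 0"
    using second_xpt_iff[OF assms] xy by (metis fst_conv snd_conv)+
  have y: "(y0, y1) \<in> P1" "x1 * y0 + (g * x0 + h * x1) * y1 = 0"
    using second_ypt_iff[OF assms] xy by (metis fst_conv snd_conv)+
  have E1: "g * x0 * y1 + x1 * y0 + h * x1 * y1 = 0"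
    using y(2) by (simp add: algebra_simps)
  moreover have "g ^ p * x0 * y1 + x1 * y0 + h ^ p * x1 * y1
      = (g * x0 * y1 + x1 * y0 + h * x1 * y1) - y1 * ((g - g ^ p) * x0 + (h - h ^ p) * x1)"
    by (simp add: algebra_simps)
  ultimately have "g ^ p * x0 * y1 + x1 * y0 + h ^ p * x1 * y1 = 0"
    using x(2) by simp
  then show ?thesis
    using x(1) y(1) E1 xy by (simp add: mem_conj_inter_normal11)
qed

lemma conj_inter_irrational_g:
  assumes "g ^ p \<noteq> g"
  shows "conj_inter p (normal11 g h) = {sing_pt, (second_xpt g h, second_ypt g h)}"
proof (intro equalityI subsetI)
  fix z assume z: "z \<in> conj_inter p (normal11 g h)"
  obtain x0 x1 y0 y1 where zz: "z = ((x0, x1), (y0, y1))"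
    by (metis prod.collapse)
  note m = z[unfolded zz mem_conj_inter_normal11]
  consider "y1 = 0" | "(g - g ^ p) * x0 + (h - h ^ p) * x1 = 0"
    using conj_inter_normal11_diff[OF z[unfolded zz]] by auto
  then show "z \<in> {sing_pt, (second_xpt g h, second_ypt g h)}"
  proof cases
    case 1
    then show ?thesis
      using z conj_inter_y1_eq_0 unfolding zz by blast
  next
    case 2
    then have "(x0, x1) = second_xpt g h"
      using second_xpt_iff[OF assms, where P = "(x0, x1)" and h = h] m by simp
    moreover have "x1 * y0 + (g * x0 + h * x1) * y1 = 0"
      using m by (simp add: algebra_simps)
    then have "(y0, y1) = second_ypt g h"
      using second_ypt_iff[OF assms, where Q = "(y0, y1)" and h = h] m
        \<open>(x0, x1) = second_xpt g h\<close>[symmetric] by simp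
    ultimately show ?thesis
      unfolding zz by simp
  qed
qed (use sing_pt_in_conj_inter second_pt_in_conj_inter[OF assms] in auto)

lemma second_pt_ne_sing_pt: "g ^ p \<noteq> g \<Longrightarrow> (second_xpt g h, second_ypt g h) \<noteq> sing_pt"
  using snd_second_xpt[of g h] by (auto simp: sing_pt_def)

lemma rational_second_pt:
  assumes "g ^ p \<noteq> g"
  shows "rational_pt emb (second_xpt g h, second_ypt g h)"
proof -
  define P where "P = second_xpt g h"
  have frob_P: "(fst P ^ p, snd P ^ p) = P"
  \<comment> \<open>Frobenius negates both \<open>h - h\<^sup>p\<close> and \<open>g\<^sup>p - g\<close>, so it fixes their ratio.\<close>
  proof -
    have "(fst P ^ p, snd P ^ p) = P1_point (- (h - h ^ p)) (- (g ^ p - g))"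
      unfolding P_def second_xpt_def P1_point_frob by (simp add: frob_diff)
    also have "\<dots> = P"
      using P1_point_scale[of "- 1" "h - h ^ p" "g ^ p - g"] by (simp add: P_def second_xpt_def)
    finally show ?thesis .
  qed
  have "(g - g ^ p) * fst P + (h - h ^ p) * snd P = 0"
    using second_xpt_iff[OF assms, where P = P and h = h] by (simp add: P_def)
  moreover have "(g * fst P + h * snd P) ^ p = g ^ p * fst P + h ^ p * snd P"
    using frob_P by (simp add: frob_add power_mult_distrib prod_eq_iff)
  ultimately have "(g * fst P + h * snd P) ^ p = g * fst P + h * snd P"
    by (simp add: algebra_simps)
  then have "(fst (second_ypt g h) ^ p, snd (second_ypt g h) ^ p) = second_ypt g h"
    using frob_P unfolding second_ypt_def P1_point_frob P_def[symmetric] by (simp add: frob_minus prod_eq_iff)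
  then show ?thesis
    using frob_P by (simp add: rational_pt_iff P_def)
qed

lemma conj_factor_normal_form:
  assumes a: "a \<in> sing_forms" and cf: "conj_factor p emb a G"
  shows "\<exists>g h u. u \<noteq> 0 \<and> G = fscale u (normal11 g h) \<and> fnormalize a = case1_form g h"
proof -
  have fG: "is_form 1 1 G" and E: "emb_form a = fmul G (gconj p G)"
    using cf unfolding conj_factor_def emb_form_def by auto
  have coeff: "emb (a i j) = fmul G (gconj p G) i j" for i j
    using fun_cong[OF fun_cong[OF E, of i], of j] by (simp add: emb_form_def)
  have "G 0 0 * G 0 0 ^ p = 0"
    using coeff[of 0 0] a by (simp add: fmul_def gconj_def sing_forms_def)
  then have G00: "G 0 0 = 0"
    by auto
  have "emb (a 2 0) = G 1 0 * G 1 0 ^ p"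
    using coeff[of 2 0] G00 p_pos by (simp add: fmul_def gconj_def sum_atMost_small is_formD[OF fG])
  then have G10: "G 1 0 \<noteq> 0"
    using a by (auto simp: sing_forms_def)
  define u where "u = G 1 0"
  define g where "g = G 0 1 / G 1 0"
  define h where "h = G 1 1 / G 1 0"
  have G: "G = fscale u (normal11 g h)"
    unfolding u_def g_def h_def by (rule form11_eq_fscale_normal11[OF fG G00 G10])
  have "emb_form a = fscale (u * u ^ p) (conj_prod g h)"
    unfolding E conj_prod_def G gconj_fscale fmul_fscale_left fmul_fscale_right fscale_fscale
    by (simp add: mult.commute)
  moreover have "emb (a 2 0) = u * u ^ p"
    using fun_cong[OF fun_cong[OF calculation, of 2], of 0]
    by (simp add: emb_form_def fscale_def conj_prod_coeffs)
  ultimately have "emb_form a = emb_form (fscale (a 2 0) (case1_form g h))"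
    by (simp add: emb_form_fscale emb_form_case1_form)
  then have "a = fscale (a 2 0) (case1_form g h)"
    by (rule emb_form_inject)
  then have "fnormalize a = case1_form g h"
    by (rule fnormalize_eqI) (use a in \<open>simp_all add: sing_forms_def case1_form_coeffs\<close>)
  moreover have "u \<noteq> 0"
    using G10 by (simp add: u_def)
  ultimately show ?thesis
    using G by blast
qed

lemma case1_normal_form:
  assumes "a \<in> sing_forms" "irred_form 2 2 a" "conj_factor p emb a G"
  shows "\<exists>g h. fnormalize a = case1_form g h \<and> g \<noteq> 0 \<and> \<not> (g ^ p = g \<and> h ^ p = h)
    \<and> conj_inter p G = conj_inter p (normal11 g h)"
proof -
  obtain g h u where u: "u \<noteq> 0" "G = fscale u (normal11 g h)" and a: "fnormalize a = case1_form g h"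
    using conj_factor_normal_form[OF assms(1,3)] by blast
  have "a = fscale (a 2 0) (case1_form g h)"
    using fscale_fnormalize[of a] sing_forms_coeff_20[OF assms(1)] a by metis
  then have "irred_form 2 2 (fscale (a 2 0) (case1_form g h))"
    using assms(2) by metis
  then have "irred_form 2 2 (case1_form g h)"
    using irred_form_fscale sing_forms_coeff_20[OF assms(1)] by blast
  moreover have "conj_inter p G = conj_inter p (normal11 g h)"
    using u by (simp add: conj_inter_fscale)
  ultimately show ?thesis
    using a irred_case1_form_iff by blast
qed

lemma conj_factor_case1_form: "conj_factor p emb (case1_form g h) (normal11 g h)"
  using emb_form_case1_form[of g h] is_form_normal11
  by (simp add: conj_factor_def emb_form_def conj_prod_def)

lemma case1i_imp_normal_form:
  assumes "a \<in> sing_forms" "case1i p emb a"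
  shows "\<exists>g h. g ^ p \<noteq> g \<and> fnormalize a = case1_form g h"
proof -
  obtain G where irr: "irred_form 2 2 a" and cf: "conj_factor p emb a G"
    and two: "card (conj_inter p G) = 2"
    using assms(2) unfolding case1i_def by blast
  obtain g h where gh: "fnormalize a = case1_form g h" "g \<noteq> 0" "\<not> (g ^ p = g \<and> h ^ p = h)"
    and CI: "conj_inter p G = conj_inter p (normal11 g h)"
    using case1_normal_form[OF assms(1) irr cf] by blast
  have "g ^ p \<noteq> g"
  proof
    assume "g ^ p = g"
    then have "conj_inter p G = {sing_pt}"
      using conj_inter_rational_g gh CI by simp
    then show False
      using two by simp
  qed
  then show ?thesis
    using gh(1) by blast
qed

lemma case1iii_imp_normal_form:
  assumes "a \<in> sing_forms" "case1iii p emb a"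
  shows "\<exists>g h. g \<noteq> 0 \<and> g ^ p = g \<and> h ^ p \<noteq> h \<and> fnormalize a = case1_form g h"
proof -
  obtain G where irr: "irred_form 2 2 a" and cf: "conj_factor p emb a G"
    and one: "card (conj_inter p G) = 1"
    using assms(2) unfolding case1iii_def by blast
  obtain g h where gh: "fnormalize a = case1_form g h" "g \<noteq> 0" "\<not> (g ^ p = g \<and> h ^ p = h)"
    and CI: "conj_inter p G = conj_inter p (normal11 g h)"
    using case1_normal_form[OF assms(1) irr cf] by blast
  have "g ^ p = g"
  proof (rule ccontr)
    assume "g ^ p \<noteq> g"
    then have "conj_inter p G = {sing_pt, (second_xpt g h, second_ypt g h)}"
      using conj_inter_irrational_g CI by simp
    then show False
      using one second_pt_ne_sing_pt[OF \<open>g ^ p \<noteq> g\<close>, where h = h] by simp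
  qed
  then show ?thesis
    using gh by blast
qed

lemma not_case1ii: "a \<in> sing_forms \<Longrightarrow> \<not> case1ii p emb a"
  unfolding case1ii_def
  using case1_normal_form sing_pt_in_conj_inter rational_sing_pt by blast

lemma case1i_case1_form:
  assumes "g ^ p \<noteq> g"
  shows "case1i p emb (case1_form g h)"
proof -
  have "g \<noteq> 0"
    using assms p_pos by (auto simp: zero_power)
  then have "irred_form 2 2 (case1_form g h)"
    using assms by (simp add: irred_case1_form_iff)
  then show ?thesis
    unfolding case1i_def
    using conj_factor_case1_form conj_inter_irrational_g[OF assms, where h = h]
      second_pt_ne_sing_pt[OF assms, where h = h] rational_sing_pt rational_second_pt[OF assms, where h = h]
    by fastforce
qed

lemma case1iii_case1_form:
  assumes "g \<noteq> 0" "g ^ p = g" "h ^ p \<noteq> h"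
  shows "case1iii p emb (case1_form g h)"
proof -
  have "irred_form 2 2 (case1_form g h)"
    using assms by (simp add: irred_case1_form_iff)
  then show ?thesis
    unfolding case1iii_def
    using conj_factor_case1_form conj_inter_rational_g[OF assms] rational_sing_pt by fastforce
qed

lemma case1_form_eqD:
  assumes "case1_form g h = case1_form g' h'"
  shows "(g', h') = (g, h) \<or> (g', h') = (g ^ p, h ^ p)"
proof -
  have c: "conj_prod g h i j = conj_prod g' h' i j" for i j
    using assms emb_form_case1_form by metis
  have conj_pair: "y = x \<or> y = x ^ p"
    if "x + x ^ p = y + y ^ p" "x * x ^ p = y * y ^ p" for x y :: 'K
    using sum_prod_eqD[of x "x ^ p" y "y ^ p"] that by (auto simp: sum_prod_def)
  have g': "g' = g \<or> g' = g ^ p"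
    using c[of 1 1] c[of 0 2] by (intro conj_pair) (simp_all only: conj_prod_coeffs)
  have h': "h' = h \<or> h' = h ^ p"
    using c[of 2 1] c[of 2 2] by (intro conj_pair) (simp_all only: conj_prod_coeffs)
  have mixed: "g * h ^ p + h * g ^ p = g' * h' ^ p + h' * g' ^ p"
    using c[of 1 2] by (simp only: conj_prod_coeffs)
  have factor: "(g - g ^ p) * (h - h ^ p) = (g * h + g ^ p * h ^ p) - (g * h ^ p + h * g ^ p)"
    by (simp add: algebra_simps)
  from g' h' consider "g' = g" "h' = h" | "g' = g ^ p" "h' = h ^ p"
    | "g' = g" "h' = h ^ p" | "g' = g ^ p" "h' = h"
    by blast
  then show ?thesis
  proof cases
    case 3
    then have "(g - g ^ p) * (h - h ^ p) = 0"
      using factor mixed by (simp add: algebra_simps)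
    then show ?thesis
      using 3 by auto
  next
    case 4
    then have "(g - g ^ p) * (h - h ^ p) = 0"
      using factor mixed by (simp add: algebra_simps)
    then show ?thesis
      using 4 by auto
  qed auto
qed

lemma card_eq_double_card_case1_forms:
  assumes "\<And>g h. (g, h) \<in> D \<Longrightarrow> (g ^ p, h ^ p) \<in> D" "\<And>g h. (g, h) \<in> D \<Longrightarrow> (g ^ p, h ^ p) \<noteq> (g, h)"
  shows "card D = 2 * card ((\<lambda>(g, h). case1_form g h) ` D)"
proof (rule card_eq_double_card_image[where s = "\<lambda>(g, h). (g ^ p, h ^ p)"])
  fix x y :: "'K \<times> 'K"
  assume "(\<lambda>(g, h). case1_form g h) x = (\<lambda>(g, h). case1_form g h) y"
  then show "y = x \<or> y = (\<lambda>(g, h). (g ^ p, h ^ p)) x"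
    using case1_form_eqD by (cases x, cases y) auto
qed (use assms in \<open>auto simp: case1_form_frob\<close>)

lemma card_irrational: "card {x :: 'K. x ^ p \<noteq> x} = p ^ 2 - p"
proof -
  have "{x :: 'K. x ^ p \<noteq> x} = UNIV - range emb"
    using range_emb_iff by auto
  then show ?thesis
    using card_image[OF inj_emb] card_k card_K by (simp add: card_Diff_subset)
qed

lemma card_rational_nonzero: "card {x :: 'K. x \<noteq> 0 \<and> x ^ p = x} = p - 1"
proof -
  have "{x :: 'K. x \<noteq> 0 \<and> x ^ p = x} = range emb - {0}"
    using range_emb_iff by auto
  moreover have "0 \<in> range emb"
    by (metis emb_zero rangeI)
  ultimately show ?thesis
    using card_image[OF inj_emb] card_k by simp
qed

lemma card_case1i_classes:
  "2 * card (scale_classes {a \<in> sing_forms. case1i p emb a}) = p ^ 3 * (p - 1)"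
proof -
  define D where "D = {g :: 'K. g ^ p \<noteq> g} \<times> (UNIV :: 'K set)"
  have "card (scale_classes {a \<in> sing_forms. case1i p emb a}) = card ((\<lambda>(g, h). case1_form g h) ` D)"
  proof (rule card_scale_classes_sing_forms)
    fix a assume "a \<in> sing_forms" "case1i p emb a"
    then obtain g h where "g ^ p \<noteq> g" "fnormalize a = case1_form g h"
      using case1i_imp_normal_form by blast
    then show "\<exists>x\<in>D. fnormalize a = (\<lambda>(g, h). case1_form g h) x"
      by (intro bexI[of _ "(g, h)"]) (simp_all add: D_def)
  qed (auto simp: D_def case1_form_in_sing_forms case1i_case1_form case1_form_coeffs)
  moreover have "card D = 2 * card ((\<lambda>(g, h). case1_form g h) ` D)"
    by (rule card_eq_double_card_case1_forms) (auto simp: D_def)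
  moreover have "card D = (p ^ 2 - p) * p ^ 2"
    by (simp add: D_def card_cartesian_product card_irrational card_K)
  moreover have "(p ^ 2 - p) * p ^ 2 = p ^ 3 * (p - 1)"
    by (simp add: power2_eq_square power3_eq_cube algebra_simps diff_mult_distrib)
  ultimately show ?thesis
    by simp
qed

lemma card_case1iii_classes:
  "2 * card (scale_classes {a \<in> sing_forms. case1iii p emb a}) = p * (p - 1) ^ 2"
proof -
  define D where "D = {g :: 'K. g \<noteq> 0 \<and> g ^ p = g} \<times> {h :: 'K. h ^ p \<noteq> h}"
  have "card (scale_classes {a \<in> sing_forms. case1iii p emb a}) = card ((\<lambda>(g, h). case1_form g h) ` D)"
  proof (rule card_scale_classes_sing_forms)
    fix a assume "a \<in> sing_forms" "case1iii p emb a"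
    then obtain g h where "g \<noteq> 0" "g ^ p = g" "h ^ p \<noteq> h" "fnormalize a = case1_form g h"
      using case1iii_imp_normal_form by blast
    then show "\<exists>x\<in>D. fnormalize a = (\<lambda>(g, h). case1_form g h) x"
      by (intro bexI[of _ "(g, h)"]) (simp_all add: D_def)
  qed (auto simp: D_def case1_form_in_sing_forms case1iii_case1_form case1_form_coeffs)
  moreover have "card D = 2 * card ((\<lambda>(g, h). case1_form g h) ` D)"
    by (rule card_eq_double_card_case1_forms) (auto simp: D_def)
  moreover have "card D = (p - 1) * (p ^ 2 - p)"
    by (simp add: D_def card_cartesian_product card_irrational card_rational_nonzero)
  moreover have "(p - 1) * (p ^ 2 - p) = p * (p - 1) ^ 2"
    by (simp add: power2_eq_square algebra_simps diff_mult_distrib diff_mult_distrib2)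
  ultimately show ?thesis
    by simp
qed

lemma case1_coeff_02:
  assumes "a \<in> sing_forms" "case1i p emb a \<or> case1iii p emb a"
  shows "a 0 2 \<noteq> 0"
proof -
  obtain g h where "g \<noteq> 0" "fnormalize a = case1_form g h"
    using assms case1i_imp_normal_form case1iii_imp_normal_form by (metis frob_eq_0_iff)
  then show ?thesis
    using fnormalize_coeff_eq_0_iff[of a] sing_forms_coeff_20[OF assms(1)] case1_form_coeff_02_eq_0_iff
    by metis
qed

end

theorem lemma4p8:
  fixes p :: nat
    and emb :: "'k::{field,finite} \<Rightarrow> 'K::{field,finite}"
  assumes "prime p"
    and "card (UNIV :: 'k set) = p"
    and "card (UNIV :: 'K set) = p ^ 2"
    and "\<forall>x y. emb (x + y) = emb x + emb y"
    and "\<forall>x y. emb (x * y) = emb x * emb y"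
    and "emb 1 = 1"
  shows "card (scale_classes (sing_forms :: (nat \<Rightarrow> nat \<Rightarrow> 'k) set)) = p ^ 5
    \<and> 2 * card (scale_classes {a \<in> sing_forms. case1i p emb a}) = p ^ 3 * (p - 1)
    \<and> card (scale_classes {a \<in> sing_forms. case1ii p emb a}) = 0
    \<and> 2 * card (scale_classes {a \<in> sing_forms. case1iii p emb a}) = p * (p - 1) ^ 2
    \<and> card (scale_classes {a \<in> (sing_forms :: (nat \<Rightarrow> nat \<Rightarrow> 'k) set). case2 a}) = 0
    \<and> 2 * card (scale_classes {a \<in> (sing_forms :: (nat \<Rightarrow> nat \<Rightarrow> 'k) set). case3 a}) = p * (p - 1)
    \<and> card (scale_classes {a \<in> (sing_forms :: (nat \<Rightarrow> nat \<Rightarrow> 'k) set). case4 a}) = p * (p - 1)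
    \<and> card (scale_classes {a \<in> (sing_forms :: (nat \<Rightarrow> nat \<Rightarrow> 'k) set). case5 a}) = p
    \<and> (\<forall>a \<in> sing_forms. (case1i p emb a \<or> case1iii p emb a \<or> case4 a) \<longrightarrow> a 0 2 \<noteq> 0)
    \<and> (\<forall>a \<in> (sing_forms :: (nat \<Rightarrow> nat \<Rightarrow> 'k) set). (case3 a \<or> case5 a) \<longrightarrow> a 0 2 = 0)"
proof -
  interpret quadratic_extension p emb
    using assms by unfold_locales
  have empty: "{a \<in> sing_forms. case1ii p emb a} = {}"
    "{a \<in> (sing_forms :: (nat \<Rightarrow> nat \<Rightarrow> 'k) set). case2 a} = {}"
    using not_case1ii sing_form_not_case2 by blast+
  have "card (scale_classes {a \<in> sing_forms. case1ii p emb a}) = 0"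
    "card (scale_classes {a \<in> (sing_forms :: (nat \<Rightarrow> nat \<Rightarrow> 'k) set). case2 a}) = 0"
    unfolding empty by (simp_all add: scale_classes_def)
  then show ?thesis
    using card_sing_classes[where 'a = 'k] card_case1i_classes card_case1iii_classes
      card_case3_classes[where 'a = 'k] card_case4_classes[where 'a = 'k] card_case5_classes[where 'a = 'k]
      case1_coeff_02 case4_coeff_02 case3_or_case5_coeff_02 card_k
    by (simp add: mult.commute) blast
qed

end
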